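(* Let $N\ge 3$ and consider a smooth field $u:\mathbb{R}^N\to\mathbb{R}$ with $t_1=x$ the space variable, and a hierarchy of evolutionary equations \[ u_{t_i}=Q_i(u_1,u_{11},\ldots),\qquad i=2,\ldots,N, \] where $Q_i$ depends only on $t_1$-derivatives of $u$. Let $L_{1i}$, $i=2,\ldots,N$, be Lagrangians of the form \[ L_{1i}[u]=p(u,u_1,u_{11},\ldots)\,u_{t_i}-h_i(u,u_1,u_{11},\ldots), \] with the same function $p$ for all $i$, whose Euler–Lagrange equations $\frac{\delta_{1i}L_{1i}}{\delta u}=0$ are of the form $\mathcal{E}_p(u_{t_i}-Q_i)=0$ for some differential operator $\mathcal{E}_p$. Assume that the prolonged vector fields $\mathfrak{D}_i=\mathrm{pr}(Q_i\partial_u)$, $i=2,\ldots,N$, commute pairwise and are variational symmetries of the Lagrangians, i.e. for all $i\ne j$ in $\{2,\ldots,N\}$ \[ \mathfrak{D}_i L_{1j}=\mathrm{D}_1A_{ij}+\mathrm{D}_jB_{ij} \] for some functions $A_{ij},B_{ij}:\mathcal{J}^\infty\to\mathbb{R}$. Then for all $i\ne j$ in $\{2,\ldots,N\}$ there exist functions $F_{ij}:\mathcal{J}^\infty\to\mathbb{R}$ of the form $F_{ij}=F_{ij}(u,u_1,u_{11},\ldots)$ (not depending on any time derivatives) such that \[ \mathrm{D}_1F_{ij}=\mathrm{D}_iL_{1j}-\mathrm{D}_jL_{1i} \] on solutions of the hierarchy.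
   Context: Subscripts $1,11,\ldots$ denote derivatives with respect to $t_1$ (e.g. $u_{11}=\partial^2u/\partial t_1^2$), and $u_{t_i}$ the derivative with respect to $t_i$. $\mathcal{J}^\infty$ denotes the fiber of the infinite jet bundle, with coordinates all partial derivatives $u_I$ of $u$, $I\in\mathbb{N}^N$ a multi-index. Total derivatives: $\mathrm{D}_i=\sum_I u_{It_i}\partial/\partial u_I$, $\mathrm{D}_I=\mathrm{D}_1^{i_1}\cdots\mathrm{D}_N^{i_N}$. For $Q:\mathcal{J}^\infty\to\mathbb{R}$, the prolongation is $\mathrm{pr}(Q\partial_u)=\sum_I(\mathrm{D}_IQ)\,\partial/\partial u_I$. The variational derivative in the $(t_i,t_j)$-plane is $\frac{\delta_{ij}L}{\delta u_I}=\sum_{\alpha,\beta\ge0}(-1)^{\alpha+\beta}\mathrm{D}_i^\alpha\mathrm{D}_j^\beta\big(\partial L/\partial u_{It_i^\alpha t_j^\beta}\big)$. *)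

theory Defs
  imports "HOL-Analysis.Analysis"
begin

text \<open>Independent variables t_1,...,t_N (t_1 = x).
A multi-index is a function I :: nat => nat, with I k = 0 for k outside {1..N}.
A point of the fibre of the infinite jet bundle is z :: (nat => nat) => real,
z I being the coordinate u_I.  Functions on the jet space carry the product
topology (HOL-Analysis Function_Topology).\<close>

type_synonym midx = "nat \<Rightarrow> nat"
type_synonym jet = "midx \<Rightarrow> real"

definition valid_midx :: "nat \<Rightarrow> midx \<Rightarrow> bool" where
  "valid_midx N I \<longleftrightarrow> (\<forall>k. k \<notin> {1..N} \<longrightarrow> I k = 0)"

text \<open>unit multi-index e_i (so that z (unit_midx i) = u_{t_i}) and zero multi-index (u itself)\<close>
definition unit_midx :: "nat \<Rightarrow> midx" where
  "unit_midx i = (\<lambda>k. if k = i then 1 else 0)"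

definition zero_midx :: midx where
  "zero_midx = (\<lambda>k. 0)"

definition shift_midx :: "nat \<Rightarrow> midx \<Rightarrow> midx" where
  "shift_midx i I = I(i := Suc (I i))"

definition jdep :: "(jet \<Rightarrow> real) \<Rightarrow> midx set" where
  "jdep f = {I. \<exists>z s. f (z(I := s)) \<noteq> f z}"

definition depends_only_on :: "midx set \<Rightarrow> (jet \<Rightarrow> real) \<Rightarrow> bool" where
  "depends_only_on S f \<longleftrightarrow> (\<forall>z z'. (\<forall>I\<in>S. z I = z' I) \<longrightarrow> f z = f z')"

definition pd :: "midx \<Rightarrow> (jet \<Rightarrow> real) \<Rightarrow> jet \<Rightarrow> real" where
  "pd I f z = deriv (\<lambda>s. f (z(I := s))) (z I)"

fun pds :: "midx list \<Rightarrow> (jet \<Rightarrow> real) \<Rightarrow> jet \<Rightarrow> real" where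
  "pds [] f = f"
| "pds (I # Is) f = pd I (pds Is f)"

definition jet_smooth :: "(jet \<Rightarrow> real) \<Rightarrow> bool" where
  "jet_smooth f \<longleftrightarrow>
     (\<forall>Is. (\<forall>I z. (\<lambda>s. pds Is f (z(I := s))) differentiable (at (z I)))
          \<and> continuous_on UNIV (pds Is f))"

text \<open>a (smooth) function on J^infinity: depends on finitely many valid coordinates\<close>
definition jfun :: "nat \<Rightarrow> (jet \<Rightarrow> real) \<Rightarrow> bool" where
  "jfun N f \<longleftrightarrow> (\<exists>S. finite S \<and> S \<subseteq> {I. valid_midx N I} \<and> depends_only_on S f)
                 \<and> jet_smooth f"

definition xonly :: "(jet \<Rightarrow> real) \<Rightarrow> bool" where
  "xonly f \<longleftrightarrow> (\<forall>I\<in>jdep f. \<forall>k. k \<noteq> 1 \<longrightarrow> I k = 0)"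

definition TD :: "nat \<Rightarrow> (jet \<Rightarrow> real) \<Rightarrow> jet \<Rightarrow> real" where
  "TD i f = (\<lambda>z. \<Sum>I\<in>jdep f. z (shift_midx i I) * pd I f z)"

definition TDm :: "nat \<Rightarrow> midx \<Rightarrow> (jet \<Rightarrow> real) \<Rightarrow> jet \<Rightarrow> real" where
  "TDm N I f = foldr (\<lambda>k g. (TD k ^^ I k) g) [1..<Suc N] f"

definition prol :: "nat \<Rightarrow> (jet \<Rightarrow> real) \<Rightarrow> (jet \<Rightarrow> real) \<Rightarrow> jet \<Rightarrow> real" where
  "prol N Q f = (\<lambda>z. \<Sum>I\<in>jdep f. TDm N I Q z * pd I f z)"

definition plane_midx :: "nat \<Rightarrow> nat \<Rightarrow> midx \<Rightarrow> nat \<Rightarrow> nat \<Rightarrow> midx" where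
  "plane_midx i j I a b = I(i := I i + a, j := I j + b)"

definition vard :: "nat \<Rightarrow> nat \<Rightarrow> (jet \<Rightarrow> real) \<Rightarrow> midx \<Rightarrow> jet \<Rightarrow> real" where
  "vard i j L I = (\<lambda>z. \<Sum>(a,b)\<in>{(a,b). plane_midx i j I a b \<in> jdep L}.
       (-1) ^ (a + b) * (TD i ^^ a) ((TD j ^^ b) (pd (plane_midx i j I a b) L)) z)"

text \<open>jet points lying on (the infinite prolongation of) solutions of u_{t_i} = Q_i, i=2..N:
  u_{I t_i} = D_I Q_i for all multi-indices I\<close>
definition on_solutions :: "nat \<Rightarrow> (nat \<Rightarrow> jet \<Rightarrow> real) \<Rightarrow> jet \<Rightarrow> bool" where
  "on_solutions N Q z \<longleftrightarrow>
     (\<forall>i\<in>{2..N}. \<forall>I. valid_midx N I \<longrightarrow> z (shift_midx i I) = TDm N I (Q i) z)"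

definition lag :: "(jet \<Rightarrow> real) \<Rightarrow> (nat \<Rightarrow> jet \<Rightarrow> real) \<Rightarrow> nat \<Rightarrow> jet \<Rightarrow> real" where
  "lag p h i = (\<lambda>z. p z * z (unit_midx i) - h i z)"

definition xop :: "nat \<Rightarrow> (nat \<Rightarrow> jet \<Rightarrow> real) \<Rightarrow> (jet \<Rightarrow> real) \<Rightarrow> jet \<Rightarrow> real" where
  "xop n a g = (\<lambda>z. \<Sum>k<n. a k z * (TD 1 ^^ k) g z)"

end

theory Submission
  imports Defs
begin

text \<open>On jets free of time derivatives u_{t_j} and all D_j vanish, so the variational symmetry
  D_i L_{1j} = D_1 A + D_j B reduces to pr(Q_i) h_j = - D_1 A.  At a jet on which
  u_{t_i x^c} = D_1^c Q_i the operator E_p(u_{t_i} - Q_i) vanishes, and the Euler--Lagrange equation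
  becomes sum_b (-1)^b D_1^b (Q_i dp/du_b - dh_i/du_b) = pr(Q_i) p.  Integrating by parts in x,
  pr(Q_j) h_i - Q_i pr(Q_j) p + Q_j pr(Q_i) p is an x-derivative.  On solutions
  D_i L_{1j} - D_j L_{1i} = Q_j pr(Q_i) p - Q_i pr(Q_j) p - pr(Q_i) h_j + pr(Q_j) h_i, since the
  terms p D_j Q_i and p D_i Q_j cancel by commutativity of the flows; by the two identities above
  this is the x-derivative of a function of u, u_1, u_11, ... .\<close>

declare One_nat_def [simp del] \<comment> \<open>keeps the index of \<open>TD 1\<close> from turning into \<open>Suc 0\<close>\<close>

section \<open>Dependence on jet coordinates\<close>

lemma jdepD: "I \<notin> jdep f \<Longrightarrow> f (z(I := s)) = f z"
  by (auto simp: jdep_def)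

lemma pd_notin_jdep: "I \<notin> jdep f \<Longrightarrow> pd I f = (\<lambda>z. 0)"
  by (rule ext) (simp add: pd_def jdepD)

lemma jdep_subset: "depends_only_on S f \<Longrightarrow> jdep f \<subseteq> S"
  unfolding jdep_def depends_only_on_def by (auto, metis fun_upd_other)

lemma jdep_binop: "jdep (\<lambda>z. F (f z) (g z)) \<subseteq> jdep f \<union> jdep g"
  unfolding jdep_def by (auto; metis)

lemma jdep_const: "jdep (\<lambda>z. c) = {}"
  unfolding jdep_def by auto

lemma jdep_coord: "jdep (\<lambda>z. z J) \<subseteq> {J}"
  unfolding jdep_def by auto

lemma jdep_sum: "jdep (\<lambda>z. \<Sum>a\<in>A. f a z) \<subseteq> (\<Union>a\<in>A. jdep (f a))"
  unfolding jdep_def by (auto intro!: sum.cong)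

lemma jdep_pd: "jdep (pd I f) \<subseteq> jdep f"
proof
  fix J assume J: "J \<in> jdep (pd I f)"
  show "J \<in> jdep f"
  proof (rule ccontr)
    assume nJ: "J \<notin> jdep f"
    have "pd I f (z(J := t)) = pd I f z" for z t
    proof (cases "J = I")
      case True
      then show ?thesis using nJ by (simp add: pd_notin_jdep)
    next
      case False
      then have "(\<lambda>s. f (z(J := t, I := s))) = (\<lambda>s. f (z(I := s)))"
        using jdepD[OF nJ] by (simp add: fun_upd_twist)
      then show ?thesis using False by (simp add: pd_def)
    qed
    then show False using J by (auto simp: jdep_def)
  qed
qed

lemma depends_only_on_mono: "S \<subseteq> T \<Longrightarrow> depends_only_on S f \<Longrightarrow> depends_only_on T f"
  unfolding depends_only_on_def by (meson subsetD)

lemma depends_only_on_binop: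
  "depends_only_on S f \<Longrightarrow> depends_only_on S g \<Longrightarrow> depends_only_on S (\<lambda>z. F (f z) (g z))"
  unfolding depends_only_on_def by metis

lemma depends_only_on_const: "depends_only_on S (\<lambda>z. c)"
  unfolding depends_only_on_def by simp

lemma depends_only_on_coord: "J \<in> S \<Longrightarrow> depends_only_on S (\<lambda>z. z J)"
  unfolding depends_only_on_def by simp

lemma depends_only_on_sum:
  "(\<And>a. a \<in> A \<Longrightarrow> depends_only_on S (f a)) \<Longrightarrow> depends_only_on S (\<lambda>z. \<Sum>a\<in>A. f a z)"
  unfolding depends_only_on_def by (metis (no_types, lifting) sum.cong)

lemma depends_only_on_pd: "depends_only_on S f \<Longrightarrow> depends_only_on S (pd I f)"
proof (cases "I \<in> S")
  case True
  assume d: "depends_only_on S f"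
  show ?thesis unfolding depends_only_on_def
  proof (intro allI impI)
    fix z z' :: jet assume e: "\<forall>K\<in>S. z K = z' K"
    have "(\<lambda>s. f (z(I:=s))) = (\<lambda>s. f (z'(I:=s)))"
    proof
      fix s have "\<forall>K\<in>S. (z(I:=s)) K = (z'(I:=s)) K" using e by simp
      then show "f (z(I:=s)) = f (z'(I:=s))" using d unfolding depends_only_on_def by blast
    qed
    moreover have "z I = z' I" using e True by simp
    ultimately show "pd I f z = pd I f z'" by (simp add: pd_def)
  qed
next
  case False
  assume d: "depends_only_on S f"
  then have "I \<notin> jdep f" using jdep_subset False by blast
  then show ?thesis by (simp add: pd_notin_jdep depends_only_on_const)
qed

lemma override_on_notin_jdep:
  assumes "finite D" "D \<inter> jdep f = {}"
  shows "f (override_on w v D) = f w"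
  using assms
proof (induction D rule: finite_induct)
  case empty
  then show ?case by simp
next
  case (insert x D)
  have "f (override_on w v (insert x D)) = f ((override_on w v D)(x := v x))"
    by (simp only: override_on_insert)
  also have "\<dots> = f (override_on w v D)" using insert.prems by (intro jdepD) auto
  also have "\<dots> = f w" using insert.prems by (intro insert.IH) auto
  finally show ?case .
qed

lemma depends_only_on_jdep:
  assumes S: "finite S" and f: "depends_only_on S f"
  shows "depends_only_on (jdep f) f"
  unfolding depends_only_on_def
proof (intro allI impI)
  fix z z' :: jet assume e: "\<forall>I\<in>jdep f. z I = z' I"
  let ?D = "{I\<in>S. z I \<noteq> z' I}"
  have "\<forall>I\<in>S. override_on z z' ?D I = z' I" by (simp add: override_on_def)
  then have "f (override_on z z' ?D) = f z'" using f unfolding depends_only_on_def by blast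
  moreover have "f (override_on z z' ?D) = f z"
    using S e by (intro override_on_notin_jdep) auto
  ultimately show "f z = f z'" by simp
qed

section \<open>Partial derivatives and smoothness\<close>

definition pdifferentiable :: "(jet \<Rightarrow> real) \<Rightarrow> bool" where
  "pdifferentiable f \<longleftrightarrow> (\<forall>I z. (\<lambda>s. f (z(I := s))) differentiable (at (z I)))"

definition cont_pdiff :: "(jet \<Rightarrow> real) \<Rightarrow> bool" where
  "cont_pdiff f \<longleftrightarrow> continuous_on UNIV f \<and> pdifferentiable f"

lemma jet_smooth_iff: "jet_smooth f \<longleftrightarrow> (\<forall>Is. cont_pdiff (pds Is f))"
  unfolding jet_smooth_def cont_pdiff_def pdifferentiable_def by (simp add: conj_commute)

lemma real_differentiable_iff_field_differentiable:
  "(f :: real \<Rightarrow> real) differentiable at x \<longleftrightarrow> f field_differentiable at x"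
  by (simp only: DERIV_deriv_iff_real_differentiable[symmetric]
      DERIV_deriv_iff_field_differentiable[symmetric])

lemma pdifferentiableD: "pdifferentiable f \<Longrightarrow> (\<lambda>s. f (z(I := s))) field_differentiable (at (z I))"
  by (simp add: pdifferentiable_def real_differentiable_iff_field_differentiable[symmetric])

lemma pd_add:
  "pdifferentiable f \<Longrightarrow> pdifferentiable g \<Longrightarrow> pd I (\<lambda>z. f z + g z) = (\<lambda>z. pd I f z + pd I g z)"
  by (rule ext) (simp add: pd_def pdifferentiableD)

lemma pd_diff:
  "pdifferentiable f \<Longrightarrow> pdifferentiable g \<Longrightarrow> pd I (\<lambda>z. f z - g z) = (\<lambda>z. pd I f z - pd I g z)"
  by (rule ext) (simp add: pd_def pdifferentiableD)

lemma pd_mult: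
  "pdifferentiable f \<Longrightarrow> pdifferentiable g \<Longrightarrow>
   pd I (\<lambda>z. f z * g z) = (\<lambda>z. pd I f z * g z + f z * pd I g z)"
  by (rule ext) (simp add: pd_def pdifferentiableD)

lemma pd_const: "pd I (\<lambda>z. c) = (\<lambda>z. 0)"
  by (rule ext) (simp add: pd_def)

lemma pd_coord: "pd I (\<lambda>z. z J) = (\<lambda>z. if I = J then 1 else 0)"
  by (rule ext) (auto simp: pd_def)

lemma pdifferentiable_add: "pdifferentiable f \<Longrightarrow> pdifferentiable g \<Longrightarrow> pdifferentiable (\<lambda>z. f z + g z)"
  unfolding pdifferentiable_def by (auto intro: differentiable_add)

lemma pdifferentiable_diff:
  "pdifferentiable f \<Longrightarrow> pdifferentiable g \<Longrightarrow> pdifferentiable (\<lambda>z. f z - g z)"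
  unfolding pdifferentiable_def by (auto intro: differentiable_diff)

lemma pdifferentiable_mult:
  "pdifferentiable f \<Longrightarrow> pdifferentiable g \<Longrightarrow> pdifferentiable (\<lambda>z. f z * g z)"
  unfolding pdifferentiable_def by (auto intro: differentiable_mult)

lemma pdifferentiable_const: "pdifferentiable (\<lambda>z. c)"
  unfolding pdifferentiable_def by simp

lemma pdifferentiable_coord: "pdifferentiable (\<lambda>z. z J)"
  unfolding pdifferentiable_def
proof (intro allI)
  fix I z
  show "(\<lambda>s. (z(I := s)) J) differentiable at (z I)"
    by (cases "I = J") auto
qed

lemma cont_pdiff_add: "cont_pdiff f \<Longrightarrow> cont_pdiff g \<Longrightarrow> cont_pdiff (\<lambda>z. f z + g z)"
  unfolding cont_pdiff_def by (auto intro: continuous_on_add pdifferentiable_add)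

lemma cont_pdiff_diff: "cont_pdiff f \<Longrightarrow> cont_pdiff g \<Longrightarrow> cont_pdiff (\<lambda>z. f z - g z)"
  unfolding cont_pdiff_def by (auto intro: continuous_on_diff pdifferentiable_diff)

lemma cont_pdiff_mult: "cont_pdiff f \<Longrightarrow> cont_pdiff g \<Longrightarrow> cont_pdiff (\<lambda>z. f z * g z)"
  unfolding cont_pdiff_def by (auto intro: continuous_on_mult pdifferentiable_mult)

lemma cont_pdiff_const: "cont_pdiff (\<lambda>z. c)"
  unfolding cont_pdiff_def by (auto intro: pdifferentiable_const)

lemma cont_pdiff_coord: "cont_pdiff (\<lambda>z. z J)"
  unfolding cont_pdiff_def by (auto intro: pdifferentiable_coord)

lemma pds_snoc: "pds (Is @ [I]) f = pds Is (pd I f)"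
  by (induction Is) auto

lemma jet_smooth_cont_pdiff: "jet_smooth f \<Longrightarrow> cont_pdiff (pds Is f)" by (simp add: jet_smooth_iff)

lemma jet_smooth_pdifferentiable: "jet_smooth f \<Longrightarrow> pdifferentiable f"
  using jet_smooth_cont_pdiff[of f "[]"] by (simp add: cont_pdiff_def)

lemma jet_smooth_pd: "jet_smooth f \<Longrightarrow> jet_smooth (pd I f)"
  unfolding jet_smooth_iff by (metis pds_snoc)

lemma pds_add:
  assumes "\<And>Ks. length Ks < length Js \<Longrightarrow> pdifferentiable (pds Ks F) \<and> pdifferentiable (pds Ks G)"
  shows "pds Js (\<lambda>z. F z + G z) = (\<lambda>z. pds Js F z + pds Js G z)"
  using assms
proof (induction Js)
  case Nil show ?case by simp
next
  case (Cons J Js)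
  have "pds Js (\<lambda>z. F z + G z) = (\<lambda>z. pds Js F z + pds Js G z)"
    using Cons.prems by (intro Cons.IH) auto
  moreover have "pdifferentiable (pds Js F)" "pdifferentiable (pds Js G)"
    using Cons.prems[of Js] by auto
  ultimately show ?case by (simp add: pd_add)
qed

lemma pds_diff:
  assumes "\<And>Ks. length Ks < length Js \<Longrightarrow> pdifferentiable (pds Ks F) \<and> pdifferentiable (pds Ks G)"
  shows "pds Js (\<lambda>z. F z - G z) = (\<lambda>z. pds Js F z - pds Js G z)"
  using assms
proof (induction Js)
  case Nil show ?case by simp
next
  case (Cons J Js)
  have "pds Js (\<lambda>z. F z - G z) = (\<lambda>z. pds Js F z - pds Js G z)"
    using Cons.prems by (intro Cons.IH) auto
  moreover have "pdifferentiable (pds Js F)" "pdifferentiable (pds Js G)"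
    using Cons.prems[of Js] by auto
  ultimately show ?case by (simp add: pd_diff)
qed

lemma pds_const: "pds Is (\<lambda>z. c) = (if Is = [] then (\<lambda>z. c) else (\<lambda>z. 0))"
  by (induction Is) (auto simp: pd_const)

lemma jet_smooth_const: "jet_smooth (\<lambda>z. c)"
  unfolding jet_smooth_iff
proof
  fix Is show "cont_pdiff (pds Is (\<lambda>z. c))"
    by (cases "Is = []") (simp_all add: pds_const cont_pdiff_const)
qed

lemma jet_smooth_add: "jet_smooth f \<Longrightarrow> jet_smooth g \<Longrightarrow> jet_smooth (\<lambda>z. f z + g z)"
  unfolding jet_smooth_iff
proof
  fix Is assume f: "\<forall>Is. cont_pdiff (pds Is f)" and g: "\<forall>Is. cont_pdiff (pds Is g)"
  have "pds Is (\<lambda>z. f z + g z) = (\<lambda>z. pds Is f z + pds Is g z)"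
    using f g by (intro pds_add) (simp add: cont_pdiff_def)
  then show "cont_pdiff (pds Is (\<lambda>z. f z + g z))" using f g by (simp add: cont_pdiff_add)
qed

lemma jet_smooth_diff: "jet_smooth f \<Longrightarrow> jet_smooth g \<Longrightarrow> jet_smooth (\<lambda>z. f z - g z)"
  unfolding jet_smooth_iff
proof
  fix Is assume f: "\<forall>Is. cont_pdiff (pds Is f)" and g: "\<forall>Is. cont_pdiff (pds Is g)"
  have "pds Is (\<lambda>z. f z - g z) = (\<lambda>z. pds Is f z - pds Is g z)"
    using f g by (intro pds_diff) (simp add: cont_pdiff_def)
  then show "cont_pdiff (pds Is (\<lambda>z. f z - g z))" using f g by (simp add: cont_pdiff_diff)
qed

lemma jet_smooth_coord: "jet_smooth (\<lambda>z. z J)"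
  unfolding jet_smooth_iff
proof
  fix Is show "cont_pdiff (pds Is (\<lambda>z. z J))"
  proof (cases Is rule: rev_cases)
    case Nil then show ?thesis by (simp add: cont_pdiff_coord)
  next
    case (snoc Js I)
    have "pds Is (\<lambda>z. z J) = pds Js (\<lambda>z. if I = J then 1 else 0)"
      using snoc by (simp add: pds_snoc pd_coord)
    moreover have "cont_pdiff (pds Js (\<lambda>z. if I = J then 1 else 0))"
      by (rule jet_smooth_cont_pdiff[OF jet_smooth_const])
    ultimately show ?thesis by simp
  qed
qed

lemma cont_pdiff_pds_mult:
  "length Is = n \<Longrightarrow> jet_smooth f \<Longrightarrow> jet_smooth g \<Longrightarrow> cont_pdiff (pds Is (\<lambda>z. f z * g z))"
proof (induction n arbitrary: Is f g rule: less_induct)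
  case (less n)
  show ?case
  proof (cases Is rule: rev_cases)
    case Nil
    then show ?thesis
      using less.prems jet_smooth_cont_pdiff[of f "[]"] jet_smooth_cont_pdiff[of g "[]"]
      by (simp add: cont_pdiff_mult)
  next
    case (snoc Js I)
    have ln: "length Js < n" using less.prems snoc by simp
    have jf: "jet_smooth (pd I f)" "jet_smooth (pd I g)" using less.prems jet_smooth_pd by auto
    have IH: "cont_pdiff (pds Ks (\<lambda>z. pd I f z * g z)) \<and> cont_pdiff (pds Ks (\<lambda>z. f z * pd I g z))"
      if "length Ks \<le> length Js" for Ks
    proof -
      have "length Ks < n" using that ln by simp
      then show ?thesis using less.IH[of "length Ks" Ks] jf less.prems by blast
    qed
    have e1: "pds Is (\<lambda>z. f z * g z) = pds Js (\<lambda>z. pd I f z * g z + f z * pd I g z)"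
      using snoc less.prems by (simp add: pds_snoc pd_mult jet_smooth_pdifferentiable)
    have e2: "pds Js (\<lambda>z. pd I f z * g z + f z * pd I g z)
       = (\<lambda>z. pds Js (\<lambda>z. pd I f z * g z) z + pds Js (\<lambda>z. f z * pd I g z) z)"
      by (rule pds_add) (use IH in \<open>auto simp: cont_pdiff_def\<close>)
    show ?thesis unfolding e1 e2 using IH[of Js] by (simp add: cont_pdiff_add)
  qed
qed

lemma jet_smooth_mult: "jet_smooth f \<Longrightarrow> jet_smooth g \<Longrightarrow> jet_smooth (\<lambda>z. f z * g z)"
  unfolding jet_smooth_iff[of "\<lambda>z. f z * g z"]
proof
  fix Is assume "jet_smooth f" "jet_smooth g"
  then show "cont_pdiff (pds Is (\<lambda>z. f z * g z))" by (rule cont_pdiff_pds_mult[OF refl])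
qed

lemma jet_smooth_sum: "finite A \<Longrightarrow> (\<And>a. a \<in> A \<Longrightarrow> jet_smooth (f a)) \<Longrightarrow> jet_smooth (\<lambda>z. \<Sum>a\<in>A. f a z)"
proof (induction A rule: finite_induct)
  case empty then show ?case by (simp add: jet_smooth_const)
next
  case (insert x F)
  have "(\<lambda>z. \<Sum>a\<in>insert x F. f a z) = (\<lambda>z. f x z + (\<Sum>a\<in>F. f a z))"
    using insert by simp
  then show ?case using insert by (simp add: jet_smooth_add)
qed

definition vfield :: "(midx \<Rightarrow> jet \<Rightarrow> real) \<Rightarrow> (jet \<Rightarrow> real) \<Rightarrow> jet \<Rightarrow> real" where
  "vfield c f = (\<lambda>z. \<Sum>I\<in>jdep f. c I z * pd I f z)"

definition fin_smooth :: "(jet \<Rightarrow> real) \<Rightarrow> bool" where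
  "fin_smooth f \<longleftrightarrow> finite (jdep f) \<and> jet_smooth f"

lemma TD_eq_vfield: "TD k f = vfield (\<lambda>I z. z (shift_midx k I)) f"
  by (simp add: TD_def vfield_def)

lemma prol_eq_vfield: "prol N Q f = vfield (\<lambda>I. TDm N I Q) f"
  by (simp add: prol_def vfield_def)

lemma vfield_eq_sum_superset: "finite S \<Longrightarrow> jdep f \<subseteq> S \<Longrightarrow> vfield c f z = (\<Sum>I\<in>S. c I z * pd I f z)"
  unfolding vfield_def
  by (rule sum.mono_neutral_left) (simp_all add: pd_notin_jdep)

lemma jdep_vfield: "jdep (vfield c f) \<subseteq> jdep f \<union> (\<Union>I\<in>jdep f. jdep (c I))"
proof -
  have "jdep (vfield c f) \<subseteq> (\<Union>I\<in>jdep f. jdep (\<lambda>z. c I z * pd I f z))"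
    unfolding vfield_def by (rule jdep_sum)
  also have "\<dots> \<subseteq> (\<Union>I\<in>jdep f. jdep (c I) \<union> jdep (pd I f))"
    using jdep_binop[of "\<lambda>x y. x * y"] by (intro UN_mono) auto
  also have "\<dots> \<subseteq> jdep f \<union> (\<Union>I\<in>jdep f. jdep (c I))"
    using jdep_pd by blast
  finally show ?thesis .
qed

lemma jdep_TD: "jdep (TD k f) \<subseteq> jdep f \<union> shift_midx k ` jdep f"
proof -
  have "jdep (\<lambda>z. z (shift_midx k I)) \<subseteq> {shift_midx k I}" for I by (rule jdep_coord)
  then show ?thesis unfolding TD_eq_vfield using jdep_vfield[of "\<lambda>I z. z (shift_midx k I)" f]
    by blast
qed

lemma depends_only_on_vfield: "depends_only_on S f \<Longrightarrow> (\<And>I. I \<in> S \<Longrightarrow> depends_only_on T (c I)) \<Longrightarrow> S \<subseteq> T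
  \<Longrightarrow> depends_only_on T (vfield c f)"
  unfolding vfield_def
proof (rule depends_only_on_sum)
  fix I assume d: "depends_only_on S f" and c: "\<And>I. I \<in> S \<Longrightarrow> depends_only_on T (c I)"
    and ST: "S \<subseteq> T" and I: "I \<in> jdep f"
  have "I \<in> S" using I jdep_subset[OF d] by blast
  have "depends_only_on T (c I)" using c \<open>I \<in> S\<close> by blast
  moreover have "depends_only_on T (pd I f)"
    using depends_only_on_mono[OF ST depends_only_on_pd[OF d]] .
  ultimately show "depends_only_on T (\<lambda>z. c I z * pd I f z)"
    by (rule depends_only_on_binop[where F="\<lambda>x y. x * y"])
qed

lemma depends_only_on_TD: "depends_only_on S f \<Longrightarrow> depends_only_on (S \<union> shift_midx k ` S) (TD k f)"
  unfolding TD_eq_vfield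
proof (rule depends_only_on_vfield)
  fix I assume "I \<in> S"
  then show "depends_only_on (S \<union> shift_midx k ` S) (\<lambda>z. z (shift_midx k I))"
    by (intro depends_only_on_coord) blast
qed auto

lemma jet_smooth_TD: "finite (jdep f) \<Longrightarrow> jet_smooth f \<Longrightarrow> jet_smooth (TD k f)"
  unfolding TD_def by (intro jet_smooth_sum jet_smooth_mult jet_smooth_coord jet_smooth_pd) auto

lemma fin_smooth_jet_smooth: "fin_smooth f \<Longrightarrow> jet_smooth f" by (simp add: fin_smooth_def)

lemma fin_smooth_finite_jdep: "fin_smooth f \<Longrightarrow> finite (jdep f)" by (simp add: fin_smooth_def)

lemma fin_smooth_add: "fin_smooth f \<Longrightarrow> fin_smooth g \<Longrightarrow> fin_smooth (\<lambda>z. f z + g z)"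
  unfolding fin_smooth_def
  using jdep_binop[of "\<lambda>x y. x + y" f g] finite_subset[of "jdep (\<lambda>z. f z + g z)" "jdep f \<union> jdep g"]
    jet_smooth_add
  by blast

lemma fin_smooth_diff: "fin_smooth f \<Longrightarrow> fin_smooth g \<Longrightarrow> fin_smooth (\<lambda>z. f z - g z)"
  unfolding fin_smooth_def
  using jdep_binop[of "\<lambda>x y. x - y" f g] finite_subset[of "jdep (\<lambda>z. f z - g z)" "jdep f \<union> jdep g"]
    jet_smooth_diff
  by blast

lemma fin_smooth_mult: "fin_smooth f \<Longrightarrow> fin_smooth g \<Longrightarrow> fin_smooth (\<lambda>z. f z * g z)"
  unfolding fin_smooth_def
  using jdep_binop[of "\<lambda>x y. x * y" f g] finite_subset[of "jdep (\<lambda>z. f z * g z)" "jdep f \<union> jdep g"]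
    jet_smooth_mult
  by blast

lemma fin_smooth_const: "fin_smooth (\<lambda>z. c)"
  unfolding fin_smooth_def by (simp add: jdep_const jet_smooth_const)

lemma fin_smooth_coord: "fin_smooth (\<lambda>z. z J)"
  unfolding fin_smooth_def
  using jdep_coord[of J] finite_subset[of "jdep (\<lambda>z. z J)" "{J}"] jet_smooth_coord by blast

lemma fin_smooth_pd: "fin_smooth f \<Longrightarrow> fin_smooth (pd I f)"
  unfolding fin_smooth_def by (meson jet_smooth_pd jdep_pd finite_subset)

lemma fin_smooth_TD: "fin_smooth f \<Longrightarrow> fin_smooth (TD k f)"
  unfolding fin_smooth_def by (meson jet_smooth_TD jdep_TD finite_UnI finite_imageI finite_subset)

lemma fin_smooth_sum: "finite A \<Longrightarrow> (\<And>a. a \<in> A \<Longrightarrow> fin_smooth (f a)) \<Longrightarrow> fin_smooth (\<lambda>z. \<Sum>a\<in>A. f a z)"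
proof (induction A rule: finite_induct)
  case empty then show ?case by (simp add: fin_smooth_const)
next
  case (insert x F)
  have "(\<lambda>z. \<Sum>a\<in>insert x F. f a z) = (\<lambda>z. f x z + (\<Sum>a\<in>F. f a z))"
    using insert by simp
  then show ?case using insert by (simp add: fin_smooth_add)
qed

lemma vfield_add:
  assumes f: "fin_smooth f" and g: "fin_smooth g"
  shows "vfield c (\<lambda>z. f z + g z) = (\<lambda>z. vfield c f z + vfield c g z)"
proof
  fix z
  have fin: "finite (jdep f \<union> jdep g)" using f g by (simp add: fin_smooth_finite_jdep)
  show "vfield c (\<lambda>z. f z + g z) z = vfield c f z + vfield c g z"
    using f g jdep_binop[of "\<lambda>x y. x + y" f g]
    by (simp add: vfield_eq_sum_superset[OF fin] pd_add jet_smooth_pdifferentiable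
        fin_smooth_jet_smooth sum.distrib distrib_left)
qed

lemma vfield_diff:
  assumes f: "fin_smooth f" and g: "fin_smooth g"
  shows "vfield c (\<lambda>z. f z - g z) = (\<lambda>z. vfield c f z - vfield c g z)"
proof
  fix z
  have fin: "finite (jdep f \<union> jdep g)" using f g by (simp add: fin_smooth_finite_jdep)
  show "vfield c (\<lambda>z. f z - g z) z = vfield c f z - vfield c g z"
    using f g jdep_binop[of "\<lambda>x y. x - y" f g]
    by (simp add: vfield_eq_sum_superset[OF fin] pd_diff jet_smooth_pdifferentiable
        fin_smooth_jet_smooth sum_subtractf right_diff_distrib)
qed

lemma vfield_mult:
  assumes f: "fin_smooth f" and g: "fin_smooth g"
  shows "vfield c (\<lambda>z. f z * g z) = (\<lambda>z. vfield c f z * g z + f z * vfield c g z)"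
proof
  fix z
  have fin: "finite (jdep f \<union> jdep g)" using f g by (simp add: fin_smooth_finite_jdep)
  show "vfield c (\<lambda>z. f z * g z) z = vfield c f z * g z + f z * vfield c g z"
    using f g jdep_binop[of "\<lambda>x y. x * y" f g]
    by (simp add: vfield_eq_sum_superset[OF fin] pd_mult jet_smooth_pdifferentiable
        fin_smooth_jet_smooth sum.distrib sum_distrib_left sum_distrib_right algebra_simps)
qed

lemma vfield_const: "vfield c (\<lambda>z. k) = (\<lambda>z. 0)"
  unfolding vfield_def jdep_const by simp

lemma vfield_coord: "vfield c (\<lambda>z. z J) = c J"
proof (rule ext)
  fix z
  have "vfield c (\<lambda>z. z J) z = (\<Sum>I\<in>{J}. c I z * pd I (\<lambda>z. z J) z)"
    by (rule vfield_eq_sum_superset[OF _ jdep_coord]) simp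
  then show "vfield c (\<lambda>z. z J) z = c J z" by (simp add: pd_coord)
qed

lemma vfield_sum: "finite A \<Longrightarrow> (\<And>a. a \<in> A \<Longrightarrow> fin_smooth (f a)) \<Longrightarrow>
  vfield c (\<lambda>z. \<Sum>a\<in>A. f a z) = (\<lambda>z. \<Sum>a\<in>A. vfield c (f a) z)"
proof (induction A rule: finite_induct)
  case empty then show ?case by (simp add: vfield_const)
next
  case (insert x F)
  have e: "(\<lambda>z. \<Sum>a\<in>insert x F. f a z) = (\<lambda>z. f x z + (\<Sum>a\<in>F. f a z))"
    using insert by simp
  have "fin_smooth (\<lambda>z. \<Sum>a\<in>F. f a z)" using insert by (intro fin_smooth_sum) auto
  then show ?case unfolding e using insert by (simp add: vfield_add)
qed

lemma TD_add: "fin_smooth f \<Longrightarrow> fin_smooth g \<Longrightarrow> TD k (\<lambda>z. f z + g z) = (\<lambda>z. TD k f z + TD k g z)"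
  unfolding TD_eq_vfield by (rule vfield_add)

lemma TD_diff: "fin_smooth f \<Longrightarrow> fin_smooth g \<Longrightarrow> TD k (\<lambda>z. f z - g z) = (\<lambda>z. TD k f z - TD k g z)"
  unfolding TD_eq_vfield by (rule vfield_diff)

lemma TD_mult:
  "fin_smooth f \<Longrightarrow> fin_smooth g \<Longrightarrow> TD k (\<lambda>z. f z * g z) = (\<lambda>z. TD k f z * g z + f z * TD k g z)"
  unfolding TD_eq_vfield by (rule vfield_mult)

lemma TD_const: "TD k (\<lambda>z. c) = (\<lambda>z. 0)"
  unfolding TD_eq_vfield by (rule vfield_const)

lemma TD_coord: "TD k (\<lambda>z. z J) = (\<lambda>z. z (shift_midx k J))"
  unfolding TD_eq_vfield vfield_coord ..

lemma TD_sum: "finite A \<Longrightarrow> (\<And>a. a \<in> A \<Longrightarrow> fin_smooth (f a)) \<Longrightarrow>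
  TD k (\<lambda>z. \<Sum>a\<in>A. f a z) = (\<lambda>z. \<Sum>a\<in>A. TD k (f a) z)"
  unfolding TD_eq_vfield by (rule vfield_sum)

lemma prol_coord: "prol N Q (\<lambda>z. z J) = TDm N J Q"
  unfolding prol_eq_vfield vfield_coord ..

definition fin_dep :: "nat \<Rightarrow> (jet \<Rightarrow> real) \<Rightarrow> bool" where
  "fin_dep N f \<longleftrightarrow> (\<exists>S. finite S \<and> S \<subseteq> {I. valid_midx N I} \<and> depends_only_on S f)"

lemma jfun_iff: "jfun N f \<longleftrightarrow> fin_dep N f \<and> jet_smooth f" by (simp add: jfun_def fin_dep_def)

lemma fin_dep_binop:
  assumes "fin_dep N f" "fin_dep N g"
  shows "fin_dep N (\<lambda>z. F (f z) (g z))"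
proof -
  obtain S T where S: "finite S" "S \<subseteq> {I. valid_midx N I}" "depends_only_on S f"
    and T: "finite T" "T \<subseteq> {I. valid_midx N I}" "depends_only_on T g"
    using assms unfolding fin_dep_def by blast
  have "depends_only_on (S \<union> T) f" by (rule depends_only_on_mono[OF _ S(3)]) auto
  moreover have "depends_only_on (S \<union> T) g" by (rule depends_only_on_mono[OF _ T(3)]) auto
  ultimately have "depends_only_on (S \<union> T) (\<lambda>z. F (f z) (g z))" by (rule depends_only_on_binop)
  then show ?thesis unfolding fin_dep_def using S T by (intro exI[of _ "S \<union> T"]) auto
qed

lemma fin_dep_const: "fin_dep N (\<lambda>z. c)"
  unfolding fin_dep_def by (intro exI[of _ "{}"]) (simp add: depends_only_on_const)

lemma fin_dep_coord: "valid_midx N J \<Longrightarrow> fin_dep N (\<lambda>z. z J)"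
  unfolding fin_dep_def by (intro exI[of _ "{J}"]) (simp add: depends_only_on_coord)

lemma fin_dep_pd: "fin_dep N f \<Longrightarrow> fin_dep N (pd I f)"
  unfolding fin_dep_def by (meson depends_only_on_pd)

lemma fin_dep_sum: "finite A \<Longrightarrow> (\<And>a. a \<in> A \<Longrightarrow> fin_dep N (f a)) \<Longrightarrow> fin_dep N (\<lambda>z. \<Sum>a\<in>A. f a z)"
proof (induction A rule: finite_induct)
  case empty then show ?case by (simp add: fin_dep_const)
next
  case (insert x F)
  have "(\<lambda>z. \<Sum>a\<in>insert x F. f a z) = (\<lambda>z. f x z + (\<Sum>a\<in>F. f a z))"
    using insert by simp
  moreover have "fin_dep N (\<lambda>z. f x z + (\<Sum>a\<in>F. f a z))"
    using insert by (intro fin_dep_binop[where F="\<lambda>x y. x + y"]) auto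
  ultimately show ?case by simp
qed

lemma valid_midx_shift: "valid_midx N I \<Longrightarrow> 1 \<le> k \<Longrightarrow> k \<le> N \<Longrightarrow> valid_midx N (shift_midx k I)"
  unfolding valid_midx_def shift_midx_def by auto

lemma fin_dep_TD:
  assumes k: "1 \<le> k" "k \<le> N" and f: "fin_dep N f"
  shows "fin_dep N (TD k f)"
proof -
  obtain S where S: "finite S" "S \<subseteq> {I. valid_midx N I}" "depends_only_on S f"
    using f unfolding fin_dep_def by blast
  have "depends_only_on (S \<union> shift_midx k ` S) (TD k f)" by (rule depends_only_on_TD[OF S(3)])
  moreover have "S \<union> shift_midx k ` S \<subseteq> {I. valid_midx N I}" using S(2) valid_midx_shift k by auto
  moreover have "finite (S \<union> shift_midx k ` S)" using S(1) by simp
  ultimately show ?thesis unfolding fin_dep_def by blast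
qed

lemma fin_dep_finite_jdep: "fin_dep N f \<Longrightarrow> finite (jdep f)"
  unfolding fin_dep_def by (meson jdep_subset finite_subset)

lemma fin_dep_jdep_valid: "fin_dep N f \<Longrightarrow> jdep f \<subseteq> {I. valid_midx N I}"
  unfolding fin_dep_def by (meson jdep_subset subset_trans)

lemma jfun_fin_smooth: "jfun N f \<Longrightarrow> fin_smooth f"
  unfolding jfun_iff fin_smooth_def using fin_dep_finite_jdep by blast

lemma jfunI: "fin_dep N f \<Longrightarrow> fin_smooth f \<Longrightarrow> jfun N f" by (simp add: jfun_iff fin_smooth_def)

lemma jfun_fin_dep: "jfun N f \<Longrightarrow> fin_dep N f" by (simp add: jfun_iff)

lemma jfun_add: "jfun N f \<Longrightarrow> jfun N g \<Longrightarrow> jfun N (\<lambda>z. f z + g z)"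
  using fin_dep_binop[OF jfun_fin_dep jfun_fin_dep, of N f g "(+)"]
    fin_smooth_add[OF jfun_fin_smooth jfun_fin_smooth, of N f N g]
  by (simp add: jfunI)

lemma jfun_diff: "jfun N f \<Longrightarrow> jfun N g \<Longrightarrow> jfun N (\<lambda>z. f z - g z)"
  using fin_dep_binop[OF jfun_fin_dep jfun_fin_dep, of N f g "(-)"]
    fin_smooth_diff[OF jfun_fin_smooth jfun_fin_smooth, of N f N g]
  by (simp add: jfunI)

lemma jfun_mult: "jfun N f \<Longrightarrow> jfun N g \<Longrightarrow> jfun N (\<lambda>z. f z * g z)"
  using fin_dep_binop[OF jfun_fin_dep jfun_fin_dep, of N f g "(*)"]
    fin_smooth_mult[OF jfun_fin_smooth jfun_fin_smooth, of N f N g]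
  by (simp add: jfunI)

lemma jfun_const: "jfun N (\<lambda>z. c)"
  by (simp add: jfunI fin_dep_const fin_smooth_const)

lemma jfun_coord: "valid_midx N J \<Longrightarrow> jfun N (\<lambda>z. z J)"
  by (simp add: jfunI fin_dep_coord fin_smooth_coord)

lemma jfun_pd: "jfun N f \<Longrightarrow> jfun N (pd I f)"
  by (meson fin_dep_pd jfunI jfun_fin_dep jfun_fin_smooth fin_smooth_pd)

lemma jfun_TD: "1 \<le> k \<Longrightarrow> k \<le> N \<Longrightarrow> jfun N f \<Longrightarrow> jfun N (TD k f)"
  by (meson fin_dep_TD jfunI jfun_fin_dep jfun_fin_smooth fin_smooth_TD)

lemma jfun_sum:
  assumes a: "finite A" "\<And>a. a \<in> A \<Longrightarrow> jfun N (f a)"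
  shows "jfun N (\<lambda>z. \<Sum>a\<in>A. f a z)"
proof -
  have "fin_dep N (\<lambda>z. \<Sum>a\<in>A. f a z)" using a by (intro fin_dep_sum) (auto intro: jfun_fin_dep)
  moreover have "fin_smooth (\<lambda>z. \<Sum>a\<in>A. f a z)" using a
    by (intro fin_smooth_sum) (auto intro: jfun_fin_smooth)
  ultimately show ?thesis by (rule jfunI)
qed

lemma valid_midx_unit: "1 \<le> j \<Longrightarrow> j \<le> N \<Longrightarrow> valid_midx N (unit_midx j)"
  unfolding valid_midx_def unit_midx_def by auto

lemma valid_midx_zero: "valid_midx N zero_midx"
  unfolding valid_midx_def zero_midx_def by auto

lemma shift_midx_zero: "shift_midx j zero_midx = unit_midx j"
  by (rule ext) (simp add: shift_midx_def zero_midx_def unit_midx_def)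

lemma foldr_TD_pow_idle: "(\<forall>k\<in>set ks. I k = 0) \<Longrightarrow> foldr (\<lambda>k g. (TD k ^^ I k) g) ks f = f"
  by (induction ks) auto

lemma TDm_zero: "TDm N zero_midx Q = Q"
  unfolding TDm_def by (rule foldr_TD_pow_idle) (simp add: zero_midx_def)

lemma TDm_unit:
  assumes j: "1 \<le> j" "j \<le> N"
  shows "TDm N (unit_midx j) Q = TD j Q"
proof -
  define F where "F = (\<lambda>k g. (TD k ^^ unit_midx j k) g)"
  have jj: "j + (Suc N - j) = Suc N" using j by simp
  have "[1..<Suc N] = [1..<j] @ [j..<Suc N]"
    using upt_add_eq_append[of 1 j "Suc N - j"] j unfolding jj by simp
  also have "[j..<Suc N] = j # [Suc j..<Suc N]" using j by (simp add: upt_conv_Cons)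
  finally have e: "[1..<Suc N] = [1..<j] @ j # [Suc j..<Suc N]" .
  have a: "foldr F [Suc j..<Suc N] Q = Q"
    unfolding F_def by (rule foldr_TD_pow_idle) (simp add: unit_midx_def)
  have b: "foldr F [1..<j] G = G" for G
    unfolding F_def by (rule foldr_TD_pow_idle) (simp add: unit_midx_def)
  have "TDm N (unit_midx j) Q = foldr F ([1..<j] @ j # [Suc j..<Suc N]) Q"
    unfolding TDm_def F_def[symmetric] e ..
  also have "\<dots> = foldr F [1..<j] (F j (foldr F [Suc j..<Suc N] Q))" by simp
  also have "\<dots> = F j Q" unfolding a b ..
  also have "\<dots> = TD j Q" by (simp add: F_def unit_midx_def One_nat_def)
  finally show ?thesis .
qed

lemma fin_smooth_TD_pow: "fin_smooth f \<Longrightarrow> fin_smooth ((TD k ^^ a) f)"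
  by (induction a) (auto simp: fin_smooth_TD)

lemma jfun_TD_pow: "1 \<le> k \<Longrightarrow> k \<le> N \<Longrightarrow> jfun N f \<Longrightarrow> jfun N ((TD k ^^ a) f)"
  by (induction a) (auto simp: jfun_TD)

lemma TD_pow_add:
  "fin_smooth f \<Longrightarrow> fin_smooth g \<Longrightarrow>
   (TD k ^^ a) (\<lambda>z. f z + g z) = (\<lambda>z. (TD k ^^ a) f z + (TD k ^^ a) g z)"
  by (induction a) (simp_all add: TD_add fin_smooth_TD_pow)

lemma TD_pow_diff:
  "fin_smooth f \<Longrightarrow> fin_smooth g \<Longrightarrow>
   (TD k ^^ a) (\<lambda>z. f z - g z) = (\<lambda>z. (TD k ^^ a) f z - (TD k ^^ a) g z)"
  by (induction a) (simp_all add: TD_diff fin_smooth_TD_pow)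

lemma TD_pow_zero: "(TD k ^^ a) (\<lambda>z. 0) = (\<lambda>z. 0)"
  by (induction a) (simp_all add: TD_const)

lemma TD_pow_coord: "(TD 1 ^^ a) (\<lambda>z. z J) = (\<lambda>z. z ((shift_midx 1 ^^ a) J))"
  by (induction a) (simp_all add: TD_coord)

section \<open>Functions of the x-derivatives only\<close>

definition x_indices :: "midx set" where "x_indices = {I. \<forall>k. k \<noteq> 1 \<longrightarrow> I k = 0}"

definition x_midx :: "nat \<Rightarrow> midx" where "x_midx c = (\<lambda>k. if k = 1 then c else 0)"

abbreviation x_determined :: "(jet \<Rightarrow> real) \<Rightarrow> bool" where
  "x_determined \<equiv> depends_only_on x_indices"

lemma x_midx_in_x_indices: "x_midx c \<in> x_indices" by (simp add: x_indices_def x_midx_def)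

lemma x_indices_eq_x_midx: "I \<in> x_indices \<Longrightarrow> I = x_midx (I 1)"
  by (rule ext) (auto simp: x_indices_def x_midx_def)

lemma shift_midx_notin_x_indices: "k \<noteq> 1 \<Longrightarrow> shift_midx k I \<notin> x_indices"
  unfolding x_indices_def shift_midx_def by auto



lemma shift_midx_1_in_x_indices_iff: "shift_midx 1 I \<in> x_indices \<longleftrightarrow> I \<in> x_indices"
  unfolding x_indices_def shift_midx_def by (auto split: if_splits)

lemma unit_midx_notin_x_indices: "j \<noteq> 1 \<Longrightarrow> unit_midx j \<notin> x_indices"
  unfolding x_indices_def unit_midx_def by auto

lemma inj_x_midx: "inj x_midx"
  by (rule injI) (metis x_midx_def)

lemma TDm_x_midx:
  assumes N: "1 \<le> N"
  shows "TDm N (x_midx c) Q = (TD 1 ^^ c) Q"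
proof -
  define F where "F = (\<lambda>k g. (TD k ^^ x_midx c k) g)"
  have e: "[1..<Suc N] = 1 # [Suc 1..<Suc N]" using N by (intro upt_conv_Cons) simp
  have a: "foldr F [Suc 1..<Suc N] Q = Q"
    unfolding F_def by (rule foldr_TD_pow_idle) (simp add: x_midx_def)
  have "TDm N (x_midx c) Q = foldr F (1 # [Suc 1..<Suc N]) Q"
    unfolding TDm_def F_def[symmetric] e ..
  also have "\<dots> = F 1 (foldr F [Suc 1..<Suc N] Q)" by simp
  also have "\<dots> = (TD 1 ^^ c) Q" unfolding a by (simp add: F_def x_midx_def)
  finally show ?thesis .
qed

lemma x_determined_TD1: "x_determined f \<Longrightarrow> x_determined (TD 1 f)"
  using depends_only_on_TD[of x_indices f 1] shift_midx_1_in_x_indices_iff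
  by (blast intro: depends_only_on_mono[rotated])

lemma x_determined_TD_pow: "x_determined f \<Longrightarrow> x_determined ((TD 1 ^^ a) f)"
  by (induction a) (simp_all add: x_determined_TD1)

lemma x_determined_eq: "x_determined f \<Longrightarrow> (\<forall>J\<in>x_indices. w J = z J) \<Longrightarrow> f w = f z"
  unfolding depends_only_on_def by (erule allE[of _ w], erule allE[of _ z]) simp

lemma xonly_x_determined:
  assumes f: "jfun N f" and x: "xonly f"
  shows "x_determined f"
proof -
  obtain S where "finite S" "depends_only_on S f" using f unfolding jfun_def by auto
  then have "depends_only_on (jdep f) f" by (rule depends_only_on_jdep)
  moreover have "jdep f \<subseteq> x_indices" using x unfolding xonly_def x_indices_def by auto
  ultimately show ?thesis by (rule depends_only_on_mono[rotated])
qed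

lemma x_determined_xonly: "x_determined f \<Longrightarrow> xonly f"
  using jdep_subset unfolding xonly_def x_indices_def by blast

definition x_restrict :: "jet \<Rightarrow> jet" where "x_restrict z = (\<lambda>I. if I \<in> x_indices then z I else 0)"

lemma x_restrict_upd:
  "x_restrict (z(I := s)) = (if I \<in> x_indices then (x_restrict z)(I := s) else x_restrict z)"
  by (rule ext) (auto simp: x_restrict_def)

lemma x_restrict_x_index: "I \<in> x_indices \<Longrightarrow> x_restrict z I = z I" by (simp add: x_restrict_def)

lemma x_restrict_notin: "I \<notin> x_indices \<Longrightarrow> x_restrict z I = 0" by (simp add: x_restrict_def)

lemma depends_only_on_comp_x_restrict:
  "depends_only_on S A \<Longrightarrow> depends_only_on S (\<lambda>z. A (x_restrict z))"
  unfolding depends_only_on_def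
proof (intro allI impI)
  fix z z' :: jet
  assume "\<forall>z z'. (\<forall>I\<in>S. z I = z' I) \<longrightarrow> A z = A z'" and "\<forall>I\<in>S. z I = z' I"
  then show "A (x_restrict z) = A (x_restrict z')" by (simp add: x_restrict_def)
qed

lemma x_determined_comp_x_restrict: "x_determined (\<lambda>z. A (x_restrict z))"
  unfolding depends_only_on_def
proof (intro allI impI)
  fix z z' :: jet assume "\<forall>I\<in>x_indices. z I = z' I"
  then have "x_restrict z = x_restrict z'" by (auto simp: x_restrict_def)
  then show "A (x_restrict z) = A (x_restrict z')" by simp
qed

lemma pd_comp_x_restrict:
  "pd I (\<lambda>z. G (x_restrict z)) = (\<lambda>z. if I \<in> x_indices then pd I G (x_restrict z) else 0)"
proof (rule ext)
  fix z
  show "pd I (\<lambda>z. G (x_restrict z)) z = (if I \<in> x_indices then pd I G (x_restrict z) else 0)"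
  proof (cases "I \<in> x_indices")
    case True
    then have "(\<lambda>s. G (x_restrict (z(I := s)))) = (\<lambda>s. G ((x_restrict z)(I := s)))"
      by (simp add: x_restrict_upd)
    then show ?thesis using True by (simp add: pd_def x_restrict_x_index)
  next
    case False
    then have "(\<lambda>s. G (x_restrict (z(I := s)))) = (\<lambda>s. G (x_restrict z))"
      by (simp add: x_restrict_upd)
    then show ?thesis using False by (simp add: pd_def)
  qed
qed

lemma pds_comp_x_restrict:
  "pds Is (\<lambda>z. A (x_restrict z))
     = (if set Is \<subseteq> x_indices then (\<lambda>z. pds Is A (x_restrict z)) else (\<lambda>z. 0))"
proof (induction Is)
  case Nil then show ?case by simp
next
  case (Cons J Js)
  show ?case
  proof (cases "set Js \<subseteq> x_indices")
    case True
    then show ?thesis using Cons by (simp add: pd_comp_x_restrict)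
  next
    case False
    then show ?thesis using Cons by (simp add: pd_const)
  qed
qed

lemma continuous_on_x_restrict: "continuous_on UNIV x_restrict"
proof (rule continuous_on_coordinatewise_then_product)
  fix I
  show "continuous_on UNIV (\<lambda>z. x_restrict z I)"
    by (cases "I \<in> x_indices") (simp_all add: x_restrict_def)
qed

lemma cont_pdiff_comp_x_restrict: "cont_pdiff G \<Longrightarrow> cont_pdiff (\<lambda>z. G (x_restrict z))"
  unfolding cont_pdiff_def
proof (intro conjI)
  assume G: "continuous_on UNIV G \<and> pdifferentiable G"
  have "continuous_on UNIV (G \<circ> x_restrict)"
    using continuous_on_compose[OF continuous_on_x_restrict, of G] G continuous_on_subset by blast
  then show "continuous_on UNIV (\<lambda>z. G (x_restrict z))" by (simp add: o_def)
  show "pdifferentiable (\<lambda>z. G (x_restrict z))" unfolding pdifferentiable_def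
  proof (intro allI)
    fix I z
    show "(\<lambda>s. G (x_restrict (z(I := s)))) differentiable at (z I)"
    proof (cases "I \<in> x_indices")
      case True
      then have e: "(\<lambda>s. G (x_restrict (z(I := s)))) = (\<lambda>s. G ((x_restrict z)(I := s)))"
        by (simp add: x_restrict_upd)
      have "(\<lambda>s. G ((x_restrict z)(I := s))) differentiable at (x_restrict z I)" using G
        by (simp add: pdifferentiable_def)
      then show ?thesis using True e by (simp add: x_restrict_x_index)
    next
      case False
      then have "(\<lambda>s. G (x_restrict (z(I := s)))) = (\<lambda>s. G (x_restrict z))"
        by (simp add: x_restrict_upd)
      then show ?thesis by simp
    qed
  qed
qed

lemma jet_smooth_comp_x_restrict: "jet_smooth A \<Longrightarrow> jet_smooth (\<lambda>z. A (x_restrict z))"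
  unfolding jet_smooth_iff
proof
  fix Is assume A: "\<forall>Is. cont_pdiff (pds Is A)"
  show "cont_pdiff (pds Is (\<lambda>z. A (x_restrict z)))"
    by (cases "set Is \<subseteq> x_indices")
      (simp_all add: pds_comp_x_restrict cont_pdiff_comp_x_restrict A cont_pdiff_const)
qed

lemma jdep_comp_x_restrict: "jdep (\<lambda>z. A (x_restrict z)) \<subseteq> jdep A"
proof
  fix I assume I: "I \<in> jdep (\<lambda>z. A (x_restrict z))"
  show "I \<in> jdep A"
  proof (rule ccontr)
    assume nI: "I \<notin> jdep A"
    have "A (x_restrict (z(I:=s))) = A (x_restrict z)" for z s
      using nI by (simp add: x_restrict_upd jdepD)
    then show False using I by (simp add: jdep_def)
  qed
qed

lemma fin_smooth_comp_x_restrict: "fin_smooth A \<Longrightarrow> fin_smooth (\<lambda>z. A (x_restrict z))"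
  unfolding fin_smooth_def
  using jdep_comp_x_restrict[of A] finite_subset[of "jdep (\<lambda>z. A (x_restrict z))" "jdep A"]
    jet_smooth_comp_x_restrict
  by blast

lemma fin_dep_comp_x_restrict: "fin_dep N A \<Longrightarrow> fin_dep N (\<lambda>z. A (x_restrict z))"
  unfolding fin_dep_def using depends_only_on_comp_x_restrict by blast

lemma jfun_comp_x_restrict: "jfun N A \<Longrightarrow> jfun N (\<lambda>z. A (x_restrict z))"
  using fin_dep_comp_x_restrict jfunI jfun_fin_dep jfun_fin_smooth fin_smooth_comp_x_restrict
  by blast

lemma x_determined_x_restrict_eq: "x_determined f \<Longrightarrow> f (x_restrict z) = f z"
  by (rule x_determined_eq[of f]) (simp_all add: x_restrict_x_index)

lemma TD_at_x_restrict: "k \<noteq> 1 \<Longrightarrow> TD k f (x_restrict z) = 0"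
  unfolding TD_def by (simp add: x_restrict_notin[OF shift_midx_notin_x_indices])

lemma TD1_comp_x_restrict:
  assumes A: "fin_smooth A"
  shows "TD 1 (\<lambda>z. A (x_restrict z)) z = TD 1 A (x_restrict z)"
proof -
  have "TD 1 (\<lambda>z. A (x_restrict z)) z
      = (\<Sum>I\<in>jdep A. z (shift_midx 1 I) * pd I (\<lambda>z. A (x_restrict z)) z)"
    unfolding TD_eq_vfield
    by (rule vfield_eq_sum_superset[OF fin_smooth_finite_jdep[OF A] jdep_comp_x_restrict])
  also have "\<dots> = (\<Sum>I\<in>jdep A. x_restrict z (shift_midx 1 I) * pd I A (x_restrict z))"
  proof (intro sum.cong refl)
    fix I
    show "z (shift_midx 1 I) * pd I (\<lambda>z. A (x_restrict z)) z
        = x_restrict z (shift_midx 1 I) * pd I A (x_restrict z)"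
      by (cases "I \<in> x_indices")
        (simp_all add: pd_comp_x_restrict x_restrict_x_index x_restrict_notin
          shift_midx_1_in_x_indices_iff)
  qed
  also have "\<dots> = TD 1 A (x_restrict z)" by (simp add: TD_def)
  finally show ?thesis .
qed

lemma x_indices_finite_bound:
  assumes "finite U" "U \<subseteq> x_indices"
  shows "\<exists>M. U \<subseteq> x_midx ` {..<M}"
proof -
  let ?M = "Suc (Max (insert 0 ((\<lambda>I. I 1) ` U)))"
  have "I \<in> x_midx ` {..<?M}" if "I \<in> U" for I
  proof
    show "I = x_midx (I 1)" using that assms(2) x_indices_eq_x_midx by blast
    have "I 1 \<le> Max (insert 0 ((\<lambda>I. I 1) ` U))" using assms(1) that by (intro Max_ge) auto
    then show "I 1 \<in> {..<?M}" by simp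
  qed
  then show ?thesis by blast
qed

lemma vfield_x_sum:
  assumes "jdep f \<subseteq> x_midx ` {..<M}"
  shows "vfield c f z = (\<Sum>b<M. c (x_midx b) z * pd (x_midx b) f z)"
proof -
  have "vfield c f z = (\<Sum>I\<in>x_midx ` {..<M}. c I z * pd I f z)"
    using assms by (intro vfield_eq_sum_superset) simp_all
  also have "\<dots> = (\<Sum>b<M. c (x_midx b) z * pd (x_midx b) f z)"
    by (simp add: sum.reindex inj_on_subset[OF inj_x_midx])
  finally show ?thesis .
qed

lemma prol_x_sum:
  "1 \<le> N \<Longrightarrow> jdep f \<subseteq> x_midx ` {..<M} \<Longrightarrow>
   prol N Q f z = (\<Sum>b<M. (TD 1 ^^ b) Q z * pd (x_midx b) f z)"
  unfolding prol_eq_vfield by (simp add: vfield_x_sum TDm_x_midx)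

lemma x_determined_bound:
  "fin_smooth f \<Longrightarrow> x_determined f \<Longrightarrow> \<exists>M. jdep f \<subseteq> x_midx ` {..<M}"
  by (intro x_indices_finite_bound fin_smooth_finite_jdep jdep_subset)

lemma x_determined_prol:
  assumes N: "1 \<le> N" and f: "fin_smooth f" "x_determined f" and Q: "x_determined Q"
  shows "x_determined (prol N Q f)"
proof -
  obtain M where "jdep f \<subseteq> x_midx ` {..<M}" using x_determined_bound[OF f] by blast
  then have "prol N Q f = (\<lambda>z. \<Sum>b<M. (TD 1 ^^ b) Q z * pd (x_midx b) f z)"
    by (intro ext prol_x_sum[OF N])
  moreover have "x_determined (\<lambda>z. (TD 1 ^^ b) Q z * pd (x_midx b) f z)" for b
    by (rule depends_only_on_binop[OF x_determined_TD_pow[OF Q] depends_only_on_pd[OF f(2)]])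
  ultimately show ?thesis by (simp add: depends_only_on_sum)
qed

section \<open>The variational symmetry on jets without time derivatives\<close>

lemma vfield_lag:
  assumes p: "fin_smooth p" and h: "fin_smooth (h j)"
  shows "vfield c (lag p h j)
       = (\<lambda>z. vfield c p z * z (unit_midx j) + p z * c (unit_midx j) z - vfield c (h j) z)"
  unfolding lag_def
  by (simp add: vfield_diff[OF fin_smooth_mult[OF p fin_smooth_coord] h]
      vfield_mult[OF p fin_smooth_coord] vfield_coord)

text \<open>On jets without time derivatives u_{t_j} and every D_j vanish, so the symmetry condition
  leaves only its h-term, which is thereby an x-derivative.\<close>

lemma prol_eq_TD1_of_variational_symmetry:
  assumes j: "j \<noteq> 1" "1 \<le> j" "j \<le> N"
    and p: "fin_smooth p" and h: "fin_smooth (h j)" "x_determined (h j)"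
    and Q: "x_determined Q" and A: "fin_smooth A"
    and sym: "prol N Q (lag p h j) = (\<lambda>z. TD 1 A z + TD j B z)"
  shows "prol N Q (h j) z = - TD 1 (\<lambda>w. A (x_restrict w)) z"
proof -
  let ?w = "x_restrict z"
  have N: "1 \<le> N" using j by simp
  have "TD 1 A ?w = TD 1 A ?w + TD j B ?w" by (simp add: TD_at_x_restrict[OF j(1)])
  also have "\<dots> = prol N Q (lag p h j) ?w" using sym by simp
  also have "\<dots> = prol N Q p ?w * ?w (unit_midx j) + p ?w * TD j Q ?w - prol N Q (h j) ?w"
    by (simp add: prol_eq_vfield vfield_lag[where h=h and j=j, OF p h(1)] TDm_unit[OF j(2,3)])
  also have "\<dots> = - prol N Q (h j) z"
    using x_determined_x_restrict_eq[OF x_determined_prol[OF N h Q]] j(1)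
    by (simp add: x_restrict_notin unit_midx_notin_x_indices TD_at_x_restrict)
  finally show ?thesis by (simp add: TD1_comp_x_restrict[OF A])
qed

section \<open>Integration by parts in x\<close>

fun ibp_rem :: "nat \<Rightarrow> (jet \<Rightarrow> real) \<Rightarrow> (jet \<Rightarrow> real) \<Rightarrow> jet \<Rightarrow> real" where
  "ibp_rem 0 f g = (\<lambda>z. 0)"
| "ibp_rem (Suc a) f g = (\<lambda>z. ibp_rem a f (TD 1 g) z + g z * ((-1)^a * (TD 1 ^^ a) f z))"

lemma fin_smooth_ibp_rem: "fin_smooth f \<Longrightarrow> fin_smooth g \<Longrightarrow> fin_smooth (ibp_rem a f g)"
  by (induction a arbitrary: g)
    (simp_all add: fin_smooth_const fin_smooth_add fin_smooth_mult fin_smooth_TD fin_smooth_TD_pow)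

lemma jfun_ibp_rem: "1 \<le> N \<Longrightarrow> jfun N f \<Longrightarrow> jfun N g \<Longrightarrow> jfun N (ibp_rem a f g)"
  by (induction a arbitrary: g) (simp_all add: jfun_const jfun_add jfun_mult jfun_TD jfun_TD_pow)

lemma x_determined_ibp_rem:
  "x_determined f \<Longrightarrow> x_determined g \<Longrightarrow> x_determined (ibp_rem a f g)"
proof (induction a arbitrary: g)
  case 0
  then show ?case by (simp add: depends_only_on_const)
next
  case (Suc a)
  have "x_determined (\<lambda>z. (-1)^a * (TD 1 ^^ a) f z)"
    by (rule depends_only_on_binop[OF depends_only_on_const x_determined_TD_pow[OF Suc.prems(1)]])
  then have step: "x_determined (\<lambda>z. g z * ((-1)^a * (TD 1 ^^ a) f z))"
    by (rule depends_only_on_binop[OF Suc.prems(2)])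
  have rem: "x_determined (ibp_rem a f (TD 1 g))"
    using Suc by (simp add: x_determined_TD1)
  show ?case using depends_only_on_binop[OF rem step, of "(+)"] by simp
qed

lemma TD_pow_ibp:
  assumes f: "fin_smooth f" and g: "fin_smooth g"
  shows "(TD 1 ^^ a) g z * f z = g z * ((-1)^a * (TD 1 ^^ a) f z) + TD 1 (ibp_rem a f g) z"
  using g
proof (induction a arbitrary: g)
  case 0
  then show ?case by (simp add: TD_const)
next
  case (Suc a)
  have g1: "fin_smooth (TD 1 g)" using Suc.prems by (rule fin_smooth_TD)
  have fa: "fin_smooth ((TD 1 ^^ a) f)" using f by (rule fin_smooth_TD_pow)
  have "(TD 1 ^^ Suc a) g z * f z = (TD 1 ^^ a) (TD 1 g) z * f z"
    by (simp only: funpow_Suc_right o_apply)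
  also have "\<dots> = TD 1 g z * ((-1)^a * (TD 1 ^^ a) f z) + TD 1 (ibp_rem a f (TD 1 g)) z"
    by (rule Suc.IH[OF g1])
  also have "\<dots> = g z * ((-1)^Suc a * (TD 1 ^^ Suc a) f z) + TD 1 (ibp_rem (Suc a) f g) z"
    using Suc.prems fa g1
    by (simp add: TD_add TD_mult TD_const fin_smooth_ibp_rem[OF f] fin_smooth_mult fin_smooth_const
        algebra_simps)
  finally show ?case .
qed

definition ibp_flux :: "nat \<Rightarrow> (nat \<Rightarrow> jet \<Rightarrow> real) \<Rightarrow> (jet \<Rightarrow> real) \<Rightarrow> jet \<Rightarrow> real" where
  "ibp_flux M g Q = (\<lambda>z. \<Sum>b<M. ibp_rem b (g b) Q z)"

lemma fin_smooth_ibp_flux: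
  "(\<And>b. fin_smooth (g b)) \<Longrightarrow> fin_smooth Q \<Longrightarrow> fin_smooth (ibp_flux M g Q)"
  unfolding ibp_flux_def by (intro fin_smooth_sum fin_smooth_ibp_rem) simp_all

lemma jfun_ibp_flux:
  "1 \<le> N \<Longrightarrow> (\<And>b. jfun N (g b)) \<Longrightarrow> jfun N Q \<Longrightarrow> jfun N (ibp_flux M g Q)"
  unfolding ibp_flux_def by (intro jfun_sum jfun_ibp_rem) simp_all

lemma x_determined_ibp_flux:
  "(\<And>b. x_determined (g b)) \<Longrightarrow> x_determined Q \<Longrightarrow> x_determined (ibp_flux M g Q)"
  unfolding ibp_flux_def by (intro depends_only_on_sum x_determined_ibp_rem)

text \<open>For \<open>g b = pd (x_midx b) f\<close> this is the Euler operator \<open>\<delta>f/\<delta>u\<close> in one variable.\<close>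

definition euler_sum :: "nat \<Rightarrow> (nat \<Rightarrow> jet \<Rightarrow> real) \<Rightarrow> jet \<Rightarrow> real" where
  "euler_sum M g z = (\<Sum>b<M. (-1)^b * (TD 1 ^^ b) (g b) z)"

lemma sum_TD_pow_mult_eq_euler_sum:
  assumes Q: "fin_smooth Q" and g: "\<And>b. fin_smooth (g b)"
  shows "(\<Sum>b<M. (TD 1 ^^ b) Q z * g b z) = Q z * euler_sum M g z + TD 1 (ibp_flux M g Q) z"
proof -
  have "(\<Sum>b<M. (TD 1 ^^ b) Q z * g b z)
      = (\<Sum>b<M. Q z * ((-1)^b * (TD 1 ^^ b) (g b) z) + TD 1 (ibp_rem b (g b) Q) z)"
    by (intro sum.cong refl TD_pow_ibp g Q)
  then show ?thesis
    by (simp add: euler_sum_def ibp_flux_def TD_sum fin_smooth_ibp_rem g Q sum.distrib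
        sum_distrib_left)
qed

section \<open>The Euler--Lagrange equation on the slice\<close>

definition tx_midx :: "nat \<Rightarrow> nat \<Rightarrow> midx" where
  "tx_midx i c = (\<lambda>k. if k = 1 then c else if k = i then 1 else 0)"

lemma unit_midx_eq_tx_midx: "i \<noteq> 1 \<Longrightarrow> unit_midx i = tx_midx i 0"
  by (rule ext) (simp add: tx_midx_def unit_midx_def)

lemma shift_midx_1_tx_midx: "i \<noteq> 1 \<Longrightarrow> shift_midx 1 (tx_midx i c) = tx_midx i (Suc c)"
  by (rule ext) (simp add: tx_midx_def shift_midx_def)

lemma shift_midx_x_midx: "i \<noteq> 1 \<Longrightarrow> shift_midx i (x_midx c) = tx_midx i c"
  by (rule ext) (simp add: tx_midx_def shift_midx_def x_midx_def)

lemma tx_midx_notin_x_indices: "i \<noteq> 1 \<Longrightarrow> tx_midx i c \<notin> x_indices"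
  unfolding x_indices_def tx_midx_def by auto

lemma TD_pow_coord_tx_midx:
  assumes i: "i \<noteq> 1"
  shows "(TD 1 ^^ a) (\<lambda>z. z (tx_midx i c)) = (\<lambda>z. z (tx_midx i (c + a)))"
proof -
  have "(shift_midx 1 ^^ a) (tx_midx i c) = tx_midx i (c + a)"
    by (induction a) (simp_all add: shift_midx_1_tx_midx[OF i])
  then show ?thesis by (simp add: TD_pow_coord)
qed

text \<open>The jet \<open>slice_jet i q z\<close> agrees with \<open>z\<close> in the x-coordinates, has
  u_{t_i x^c} = D_1^c q, and vanishes elsewhere.  Every operator applied to u_{t_i} - q vanishes
  there, which turns the Euler--Lagrange hypothesis into an identity between x-only functions.\<close>

definition slice_jet :: "nat \<Rightarrow> (jet \<Rightarrow> real) \<Rightarrow> jet \<Rightarrow> jet" where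
  "slice_jet i q z =
     (\<lambda>J. if J \<in> x_indices then z J else if (\<exists>c. J = tx_midx i c) then (TD 1 ^^ (J 1)) q z else 0)"

lemma slice_jet_x_index: "J \<in> x_indices \<Longrightarrow> slice_jet i q z J = z J"
  by (simp add: slice_jet_def)

lemma slice_jet_tx_midx: "i \<noteq> 1 \<Longrightarrow> slice_jet i q z (tx_midx i c) = (TD 1 ^^ c) q z"
  using tx_midx_notin_x_indices[of i c] by (auto simp: slice_jet_def tx_midx_def)

lemma x_determined_slice_jet_eq: "x_determined f \<Longrightarrow> f (slice_jet i q z) = f z"
  by (rule x_determined_eq[of f]) (simp_all add: slice_jet_x_index)

lemma vard_zero_midx_eq:
  assumes i: "i \<noteq> 1" and L: "jdep L \<subseteq> x_midx ` {..<M} \<union> {unit_midx i}"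
  shows "vard 1 i L zero_midx w
       = (\<Sum>b<M. (-1)^b * (TD 1 ^^ b) (pd (x_midx b) L) w) - TD i (pd (unit_midx i) L) w"
proof -
  define T where "T = (\<lambda>b. (b, 0::nat)) ` {..<M} \<union> {(0, 1)}"
  define tm where "tm = (\<lambda>(c, d). (-1::real) ^ (c + d) *
      (TD 1 ^^ c) ((TD i ^^ d) (pd (plane_midx 1 i zero_midx c d) L)) w)"
  have plane: "plane_midx 1 i zero_midx c d = (\<lambda>k. if k = 1 then c else if k = i then d else 0)"
    for c d using i by (auto simp: plane_midx_def zero_midx_def)
  have x_midx_eq: "plane_midx 1 i zero_midx c 0 = x_midx c" for c
    by (auto simp: plane x_midx_def)
  have unit_midx_eq: "plane_midx 1 i zero_midx 0 1 = unit_midx i"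
    using i by (auto simp: plane unit_midx_def)
  have support: "{(c, d). plane_midx 1 i zero_midx c d \<in> jdep L} \<subseteq> T"
  proof clarify
    fix c d assume "plane_midx 1 i zero_midx c d \<in> jdep L"
    then have "plane_midx 1 i zero_midx c d \<in> x_midx ` {..<M} \<union> {unit_midx i}" using L by blast
    then consider e where "e < M" "plane_midx 1 i zero_midx c d = x_midx e"
      | "plane_midx 1 i zero_midx c d = unit_midx i" by blast
    then show "(c, d) \<in> T"
    proof cases
      case (1 e)
      have "d = 0" "c = e"
        using fun_cong[OF 1(2), of i] fun_cong[OF 1(2), of 1] i by (simp_all add: plane x_midx_def)
      then show ?thesis using 1(1) by (simp add: T_def)
    next
      case 2
      have "d = 1" "c = 0"
        using fun_cong[OF 2, of i] fun_cong[OF 2, of 1] i by (simp_all add: plane unit_midx_def)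
      then show ?thesis by (simp add: T_def)
    qed
  qed
  have "vard 1 i L zero_midx w = (\<Sum>x\<in>{(c, d). plane_midx 1 i zero_midx c d \<in> jdep L}. tm x)"
    unfolding vard_def tm_def ..
  also have "\<dots> = (\<Sum>x\<in>T. tm x)"
    using support
    by (intro sum.mono_neutral_left) (auto simp: T_def tm_def pd_notin_jdep TD_pow_zero)
  also have "\<dots> = (\<Sum>b<M. tm (b, 0)) + tm (0, 1)"
    unfolding T_def by (subst sum.union_disjoint) (auto simp: sum.reindex inj_on_def)
  also have "\<dots> = (\<Sum>b<M. (-1)^b * (TD 1 ^^ b) (pd (x_midx b) L) w) - TD i (pd (unit_midx i) L) w"
    by (simp add: tm_def x_midx_eq unit_midx_eq) (simp add: One_nat_def)
  finally show ?thesis .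
qed

lemma pd_lag:
  assumes p: "fin_smooth p" and h: "fin_smooth (h i)"
  shows "pd J (lag p h i)
       = (\<lambda>w. pd J p w * w (unit_midx i) + (if J = unit_midx i then p w else 0) - pd J (h i) w)"
  unfolding lag_def
  using p h by (simp add: pd_diff pd_mult pd_coord pdifferentiable_mult pdifferentiable_coord
      jet_smooth_pdifferentiable fin_smooth_jet_smooth)

lemma vard_lag:
  assumes i: "i \<noteq> 1" and p: "fin_smooth p" "x_determined p"
    and h: "fin_smooth (h i)" "x_determined (h i)" and M: "jdep p \<union> jdep (h i) \<subseteq> x_midx ` {..<M}"
  shows "vard 1 i (lag p h i) zero_midx w
       = (\<Sum>b<M. (-1)^b * (TD 1 ^^ b)
            (\<lambda>w. pd (x_midx b) p w * w (unit_midx i) - pd (x_midx b) (h i) w) w) - TD i p w"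
proof -
  have x_ne_t: "x_midx b \<noteq> unit_midx i" for b
    using x_midx_in_x_indices unit_midx_notin_x_indices[OF i] by metis
  have t_notin: "unit_midx i \<notin> jdep p" "unit_midx i \<notin> jdep (h i)"
    using jdep_subset[OF p(2)] jdep_subset[OF h(2)] unit_midx_notin_x_indices[OF i] by auto
  have "jdep (lag p h i) \<subseteq> jdep (\<lambda>z. p z * z (unit_midx i)) \<union> jdep (h i)"
    unfolding lag_def by (rule jdep_binop)
  also have "\<dots> \<subseteq> jdep p \<union> {unit_midx i} \<union> jdep (h i)"
    using jdep_binop[of "\<lambda>x y. x * y" p "\<lambda>z. z (unit_midx i)"] jdep_coord[of "unit_midx i"] by blast
  finally have "jdep (lag p h i) \<subseteq> x_midx ` {..<M} \<union> {unit_midx i}" using M by blast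
  then show ?thesis
    by (simp add: vard_zero_midx_eq[OF i] pd_lag[where h=h and i=i, OF p(1) h(1)] x_ne_t
        pd_notin_jdep t_notin)
qed

lemma TD_pow_Suc_mult:
  assumes f: "fin_smooth f" and g: "fin_smooth g"
  shows "(TD k ^^ Suc a) (\<lambda>w. f w * g w)
       = (\<lambda>w. (TD k ^^ a) (\<lambda>w. TD k f w * g w) w + (TD k ^^ a) (\<lambda>w. f w * TD k g w) w)"
proof -
  have "(TD k ^^ Suc a) (\<lambda>w. f w * g w) = (TD k ^^ a) (TD k (\<lambda>w. f w * g w))"
    by (simp only: funpow_Suc_right o_apply)
  also have "\<dots> = (TD k ^^ a) (\<lambda>w. TD k f w * g w + f w * TD k g w)"
    by (simp add: TD_mult[OF f g])
  also have "\<dots> = (\<lambda>w. (TD k ^^ a) (\<lambda>w. TD k f w * g w) w + (TD k ^^ a) (\<lambda>w. f w * TD k g w) w)"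
    using f g by (intro TD_pow_add fin_smooth_mult fin_smooth_TD)
  finally show ?thesis .
qed

text \<open>Both sides obey the same Leibniz recursion in \<open>a\<close>: D_1 raises \<open>c\<close> by one in
  u_{t_i x^c} as well as in D_1^c q.\<close>

lemma TD_pow_at_slice_jet:
  assumes i: "i \<noteq> 1" and q: "fin_smooth q" "x_determined q"
    and f: "fin_smooth f" "x_determined f"
  shows "(TD 1 ^^ a) (\<lambda>w. f w * w (tx_midx i c)) (slice_jet i q z)
       = (TD 1 ^^ a) (\<lambda>w. f w * (TD 1 ^^ c) q w) (slice_jet i q z)"
  using f
proof (induction a arbitrary: f c)
  case 0
  then show ?case
    by (simp add: slice_jet_tx_midx[OF i]
        x_determined_slice_jet_eq[OF x_determined_TD_pow[OF q(2)]])
next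
  case (Suc a)
  have f1: "fin_smooth (TD 1 f)" "x_determined (TD 1 f)"
    using Suc.prems by (simp_all add: fin_smooth_TD x_determined_TD1)
  have "TD 1 (\<lambda>w. w (tx_midx i c)) = (\<lambda>w. w (tx_midx i (Suc c)))"
    by (simp add: TD_coord shift_midx_1_tx_midx[OF i])
  then show ?case
    unfolding TD_pow_Suc_mult[OF Suc.prems(1) fin_smooth_coord]
      TD_pow_Suc_mult[OF Suc.prems(1) fin_smooth_TD_pow[OF q(1)]]
    by (simp add: Suc.IH[OF f1] Suc.IH[OF Suc.prems])
qed

lemma TD_at_slice_jet:
  assumes N: "1 \<le> N" and i: "i \<noteq> 1" and f: "fin_smooth f" "x_determined f"
  shows "TD i f (slice_jet i Q z) = prol N Q f z"
proof -
  obtain M where M: "jdep f \<subseteq> x_midx ` {..<M}" using x_determined_bound[OF f] by blast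
  have "TD i f (slice_jet i Q z)
      = (\<Sum>b<M. slice_jet i Q z (shift_midx i (x_midx b)) * pd (x_midx b) f (slice_jet i Q z))"
    unfolding TD_eq_vfield by (rule vfield_x_sum[OF M])
  also have "\<dots> = (\<Sum>b<M. (TD 1 ^^ b) Q z * pd (x_midx b) f z)"
    by (simp add: shift_midx_x_midx[OF i] slice_jet_tx_midx[OF i]
        x_determined_slice_jet_eq[OF depends_only_on_pd[OF f(2)]])
  also have "\<dots> = prol N Q f z" by (rule prol_x_sum[OF N M, symmetric])
  finally show ?thesis .
qed

lemma xop_at_slice_jet:
  assumes i: "i \<noteq> 1" and Q: "fin_smooth Q" "x_determined Q"
  shows "xop n a (\<lambda>z. z (unit_midx i) - Q z) (slice_jet i Q z) = 0"
proof -
  have "(TD 1 ^^ k) (\<lambda>z. z (unit_midx i) - Q z) (slice_jet i Q z) = 0" for k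
    using TD_pow_coord_tx_midx[OF i, of k 0]
    by (simp add: TD_pow_diff[OF fin_smooth_coord Q(1)] unit_midx_eq_tx_midx[OF i]
        slice_jet_tx_midx[OF i] x_determined_slice_jet_eq[OF x_determined_TD_pow[OF Q(2)]])
  then show ?thesis by (simp add: xop_def)
qed

lemma euler_sum_lag_eq_prol:
  assumes N: "1 \<le> N" and i: "i \<noteq> 1" and Q: "fin_smooth Q" "x_determined Q"
    and p: "fin_smooth p" "x_determined p" and h: "fin_smooth (h i)" "x_determined (h i)"
    and M: "jdep p \<union> jdep (h i) \<subseteq> x_midx ` {..<M}"
    and EL: "vard 1 i (lag p h i) zero_midx = xop n a (\<lambda>z. z (unit_midx i) - Q z)"
  shows "euler_sum M (\<lambda>b w. pd (x_midx b) p w * Q w) z - euler_sum M (\<lambda>b. pd (x_midx b) (h i)) z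
       = prol N Q p z"
proof -
  let ?w = "slice_jet i Q z"
  have on_slice: "(TD 1 ^^ b) (\<lambda>w. pd (x_midx b) p w * w (unit_midx i) - pd (x_midx b) (h i) w) ?w
      = (TD 1 ^^ b) (\<lambda>w. pd (x_midx b) p w * Q w) z - (TD 1 ^^ b) (pd (x_midx b) (h i)) z" for b
  proof -
    have pb: "fin_smooth (pd (x_midx b) p)" "x_determined (pd (x_midx b) p)"
      using p by (simp_all add: fin_smooth_pd depends_only_on_pd)
    have "(TD 1 ^^ b) (\<lambda>w. pd (x_midx b) p w * w (tx_midx i 0)) ?w
        = (TD 1 ^^ b) (\<lambda>w. pd (x_midx b) p w * Q w) ?w"
      using TD_pow_at_slice_jet[OF i Q pb, of b 0] by simp
    then show ?thesis
      using x_determined_slice_jet_eq[OF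
          x_determined_TD_pow[OF depends_only_on_binop[OF pb(2) Q(2)]]]
        x_determined_slice_jet_eq[OF x_determined_TD_pow[OF depends_only_on_pd[OF h(2)]]]
      by (simp add: TD_pow_diff fin_smooth_mult fin_smooth_coord fin_smooth_pd pb(1) h(1)
          unit_midx_eq_tx_midx[OF i])
  qed
  have "0 = vard 1 i (lag p h i) zero_midx ?w" using EL xop_at_slice_jet[OF i Q] by simp
  also have "\<dots> = (\<Sum>b<M. (-1)^b * (TD 1 ^^ b)
      (\<lambda>w. pd (x_midx b) p w * w (unit_midx i) - pd (x_midx b) (h i) w) ?w) - TD i p ?w"
    by (rule vard_lag[where h=h, OF i p h M])
  also have "\<dots> = euler_sum M (\<lambda>b w. pd (x_midx b) p w * Q w) z
      - euler_sum M (\<lambda>b. pd (x_midx b) (h i)) z - prol N Q p z"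
    by (simp add: on_slice TD_at_slice_jet[OF N i p] euler_sum_def sum_subtractf right_diff_distrib)
  finally show ?thesis by simp
qed

definition lag_curl ::
  "nat \<Rightarrow> (nat \<Rightarrow> jet \<Rightarrow> real) \<Rightarrow> (jet \<Rightarrow> real) \<Rightarrow> (nat \<Rightarrow> jet \<Rightarrow> real) \<Rightarrow> nat \<Rightarrow> nat \<Rightarrow> jet \<Rightarrow> real"
  where "lag_curl N Q p h i j z = prol N (Q i) p z * Q j z - prol N (Q j) p z * Q i z
    - prol N (Q i) (h j) z + prol N (Q j) (h i) z"

lemma TD1_ibp_potential:
  assumes N: "1 \<le> N" and Q: "fin_smooth (Q i)" "fin_smooth (Q j)"
    and p: "fin_smooth p" and h: "fin_smooth (h i)" and A: "fin_smooth A"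
    and M: "jdep p \<union> jdep (h i) \<subseteq> x_midx ` {..<M}"
    and sym: "\<And>z. prol N (Q i) (h j) z = - TD 1 A z"
    and EL: "\<And>z. euler_sum M (\<lambda>b w. pd (x_midx b) p w * Q i w) z
                - euler_sum M (\<lambda>b. pd (x_midx b) (h i)) z = prol N (Q i) p z"
  shows "TD 1 (\<lambda>w. ibp_flux M (\<lambda>b. pd (x_midx b) (h i)) (Q j) w
            - ibp_flux M (\<lambda>b w. pd (x_midx b) p w * Q i w) (Q j) w + A w) z
       = lag_curl N Q p h i j z"
proof -
  define gp where "gp = (\<lambda>b w. pd (x_midx b) p w * Q i w)"
  define gh where "gh = (\<lambda>b. pd (x_midx b) (h i))"
  have g: "fin_smooth (gp b)" "fin_smooth (gh b)" for b
    unfolding gp_def gh_def using p Q h by (simp_all add: fin_smooth_mult fin_smooth_pd)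
  have "prol N (Q j) (h i) z = Q j z * euler_sum M gh z + TD 1 (ibp_flux M gh (Q j)) z"
    using M sum_TD_pow_mult_eq_euler_sum[OF Q(2) g(2), where M=M and z=z]
    by (simp add: prol_x_sum[OF N, of "h i" M] gh_def)
  moreover have "prol N (Q j) p z * Q i z = Q j z * euler_sum M gp z + TD 1 (ibp_flux M gp (Q j)) z"
    using M sum_TD_pow_mult_eq_euler_sum[OF Q(2) g(1), where M=M and z=z]
    by (simp add: prol_x_sum[OF N, of p M] gp_def sum_distrib_right mult.assoc)
  moreover have "TD 1 (\<lambda>w. ibp_flux M gh (Q j) w - ibp_flux M gp (Q j) w + A w) z
      = TD 1 (ibp_flux M gh (Q j)) z - TD 1 (ibp_flux M gp (Q j)) z + TD 1 A z"
    using g Q A by (simp add: TD_add TD_diff fin_smooth_diff fin_smooth_ibp_flux)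
  ultimately show ?thesis
    using sym[of z] EL[of z] unfolding gp_def gh_def lag_curl_def by (simp add: algebra_simps)
qed

lemma exists_x_potential:
  assumes N: "1 \<le> N" and i: "i \<in> {2..N}" and j: "j \<in> {2..N}"
    and Q: "\<forall>k\<in>{2..N}. jfun N (Q k) \<and> xonly (Q k)" and p: "jfun N p" "xonly p"
    and h: "\<forall>k\<in>{2..N}. jfun N (h k) \<and> xonly (h k)"
    and EL: "vard 1 i (lag p h i) zero_midx = xop n a (\<lambda>z. z (unit_midx i) - Q i z)"
    and A: "jfun N A" and sym: "prol N (Q i) (lag p h j) = (\<lambda>z. TD 1 A z + TD j B z)"
  shows "\<exists>F. jfun N F \<and> xonly F \<and> (\<forall>z. TD 1 F z = lag_curl N Q p h i j z)"
proof -
  note fs = jfun_fin_smooth and xd = xonly_x_determined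
  have i1: "i \<noteq> 1" and j1: "j \<noteq> 1" "1 \<le> j" "j \<le> N" using i j by auto
  have Qi: "jfun N (Q i)" "xonly (Q i)" and Qj: "jfun N (Q j)" "xonly (Q j)"
    and hi: "jfun N (h i)" "xonly (h i)" and hj: "jfun N (h j)" "xonly (h j)"
    using Q h i j by auto
  obtain M where M: "jdep p \<union> jdep (h i) \<subseteq> x_midx ` {..<M}"
    using x_indices_finite_bound[of "jdep p \<union> jdep (h i)"] p hi
    by (metis fs xd fin_smooth_finite_jdep finite_UnI jdep_subset Un_least)
  define gp where "gp = (\<lambda>b w. pd (x_midx b) p w * Q i w)"
  define gh where "gh = (\<lambda>b. pd (x_midx b) (h i))"
  have "jfun N (gp b)" "jfun N (gh b)" "x_determined (gp b)" "x_determined (gh b)" for b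
    using p Qi hi unfolding gp_def gh_def
    by (simp_all add: xd jfun_mult jfun_pd depends_only_on_pd depends_only_on_binop)
  then have flux: "jfun N (ibp_flux M gh (Q j))" "jfun N (ibp_flux M gp (Q j))"
    "x_determined (ibp_flux M gh (Q j))" "x_determined (ibp_flux M gp (Q j))"
    using Qj by (simp_all add: jfun_ibp_flux[OF N] x_determined_ibp_flux xd)
  define F where "F = (\<lambda>w. ibp_flux M gh (Q j) w - ibp_flux M gp (Q j) w + A (x_restrict w))"
  have "jfun N F"
    unfolding F_def by (rule jfun_add[OF jfun_diff[OF flux(1,2)] jfun_comp_x_restrict[OF A]])
  moreover have "x_determined (\<lambda>w. ibp_flux M gh (Q j) w - ibp_flux M gp (Q j) w)"
    by (rule depends_only_on_binop[OF flux(3,4)])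
  then have "xonly F"
    unfolding F_def
    by (rule x_determined_xonly[OF depends_only_on_binop[OF _ x_determined_comp_x_restrict]])
  moreover have "TD 1 F z = lag_curl N Q p h i j z" for z
    unfolding F_def gp_def gh_def
  proof (rule TD1_ibp_potential[where Q=Q and h=h, OF N fs[OF Qi(1)] fs[OF Qj(1)] fs[OF p(1)]
        fs[OF hi(1)] fin_smooth_comp_x_restrict[OF fs[OF A]] M])
    show "prol N (Q i) (h j) z = - TD 1 (\<lambda>w. A (x_restrict w)) z" for z
      using sym by (rule prol_eq_TD1_of_variational_symmetry[where h=h, OF j1 fs[OF p(1)]
          fs[OF hj(1)] xd[OF hj] xd[OF Qi] fs[OF A]])
    show "euler_sum M (\<lambda>b w. pd (x_midx b) p w * Q i w) z
        - euler_sum M (\<lambda>b. pd (x_midx b) (h i)) z = prol N (Q i) p z" for z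
      by (rule euler_sum_lag_eq_prol[where h=h, OF N i1 fs[OF Qi(1)] xd[OF Qi] fs[OF p(1)] xd[OF p]
          fs[OF hi(1)] xd[OF hi] M EL])
  qed
  ultimately show ?thesis by blast
qed

section \<open>Restriction to solutions\<close>

lemma TD_eq_prol_on_solutions:
  assumes z: "on_solutions N Q z" and i: "i \<in> {2..N}" and f: "jfun N f"
  shows "TD i f z = prol N (Q i) f z"
  unfolding TD_def prol_def
proof (intro sum.cong refl)
  fix I assume "I \<in> jdep f"
  then have "valid_midx N I" using fin_dep_jdep_valid[OF jfun_fin_dep[OF f]] by blast
  then show "z (shift_midx i I) * pd I f z = TDm N I (Q i) z * pd I f z"
    using z i unfolding on_solutions_def by simp
qed

lemma TD_lag_antisym_on_solutions:
  assumes z: "on_solutions N Q z" and i: "i \<in> {2..N}" and j: "j \<in> {2..N}"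
    and Q: "\<forall>k\<in>{2..N}. jfun N (Q k)" and p: "jfun N p" and h: "\<forall>k\<in>{2..N}. jfun N (h k)"
    and comm: "prol N (Q j) (Q i) = prol N (Q i) (Q j)"
  shows "TD i (lag p h j) z - TD j (lag p h i) z = lag_curl N Q p h i j z"
proof -
  have TD_lag: "TD k (lag p h l) z
      = prol N (Q k) p z * Q l z + p z * prol N (Q l) (Q k) z - prol N (Q k) (h l) z"
    if k: "k \<in> {2..N}" and l: "l \<in> {2..N}" for k l
  proof -
    have "jfun N (lag p h l)"
      unfolding lag_def using p h l by (intro jfun_diff jfun_mult jfun_coord valid_midx_unit) auto
    then have "TD k (lag p h l) z = prol N (Q k) (lag p h l) z"
      by (rule TD_eq_prol_on_solutions[OF z k])
    also have "\<dots> = prol N (Q k) p z * z (unit_midx l) + p z * TD l (Q k) z - prol N (Q k) (h l) z"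
      using jfun_fin_smooth[OF p] jfun_fin_smooth[of N "h l"] h l
      by (simp add: prol_eq_vfield vfield_lag[where h=h and j=l] TDm_unit)
    also have "z (unit_midx l) = Q l z"
      using z l valid_midx_zero[of N] unfolding on_solutions_def
      by (metis shift_midx_zero TDm_zero)
    also have "TD l (Q k) z = prol N (Q l) (Q k) z"
      using Q k by (intro TD_eq_prol_on_solutions[OF z l]) simp
    finally show ?thesis .
  qed
  show ?thesis
    using TD_lag[OF i j] TD_lag[OF j i] comm unfolding lag_curl_def by (simp add: algebra_simps)
qed

theorem lemma1:
  fixes N :: nat and Q h :: "nat \<Rightarrow> jet \<Rightarrow> real" and p :: "jet \<Rightarrow> real"
    and n :: nat and a :: "nat \<Rightarrow> jet \<Rightarrow> real"
  assumes N3: "N \<ge> 3"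
    and Q_jet: "\<forall>i\<in>{2..N}. jfun N (Q i) \<and> xonly (Q i) \<and> zero_midx \<notin> jdep (Q i)"
    and p_jet: "jfun N p \<and> xonly p"
    and h_jet: "\<forall>i\<in>{2..N}. jfun N (h i) \<and> xonly (h i)"
    and E_jet: "\<forall>k<n. jfun N (a k) \<and> xonly (a k)"
    and EL: "\<forall>i\<in>{2..N}. vard 1 i (lag p h i) zero_midx
                = xop n a (\<lambda>z. z (unit_midx i) - Q i z)"
    and commute: "\<forall>i\<in>{2..N}. \<forall>j\<in>{2..N}. \<forall>f. jfun N f \<longrightarrow>
                prol N (Q i) (prol N (Q j) f) = prol N (Q j) (prol N (Q i) f)"
    and varsym: "\<forall>i\<in>{2..N}. \<forall>j\<in>{2..N}. i \<noteq> j \<longrightarrow>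
                (\<exists>A B. jfun N A \<and> jfun N B \<and>
                   prol N (Q i) (lag p h j) = (\<lambda>z. TD 1 A z + TD j B z))"
  shows "\<forall>i\<in>{2..N}. \<forall>j\<in>{2..N}. i \<noteq> j \<longrightarrow>
           (\<exists>F. jfun N F \<and> xonly F \<and>
              (\<forall>z. on_solutions N Q z \<longrightarrow>
                  TD 1 F z = TD i (lag p h j) z - TD j (lag p h i) z))"
proof (intro ballI impI)
  fix i j assume i: "i \<in> {2..N}" and j: "j \<in> {2..N}" and "i \<noteq> j"
  have N: "1 \<le> N" using N3 by simp
  obtain A B where A: "jfun N A" and sym: "prol N (Q i) (lag p h j) = (\<lambda>z. TD 1 A z + TD j B z)"
    using varsym i j \<open>i \<noteq> j\<close> by blast
  have Q: "\<forall>k\<in>{2..N}. jfun N (Q k) \<and> xonly (Q k)" using Q_jet by blast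
  have EL_i: "vard 1 i (lag p h i) zero_midx = xop n a (\<lambda>z. z (unit_midx i) - Q i z)"
    using EL i by blast
  obtain F where F: "jfun N F" "xonly F" and TD1_F: "\<forall>z. TD 1 F z = lag_curl N Q p h i j z"
    using exists_x_potential[OF N i j Q p_jet[THEN conjunct1] p_jet[THEN conjunct2] h_jet EL_i
        A sym]
    by blast
  have "prol N (Q j) (Q i) = prol N (Q i) (Q j)"
    using commute i j jfun_coord[OF valid_midx_zero] by (metis prol_coord TDm_zero)
  then have "TD 1 F z = TD i (lag p h j) z - TD j (lag p h i) z" if "on_solutions N Q z" for z
    using TD1_F TD_lag_antisym_on_solutions[OF that i j _ _ _] Q_jet p_jet h_jet by simp
  then show "\<exists>F. jfun N F \<and> xonly F \<and>
      (\<forall>z. on_solutions N Q z \<longrightarrow> TD 1 F z = TD i (lag p h j) z - TD j (lag p h i) z)"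
    using F by blast
qed
end
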